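(* Let $E_1=(\bar S,\bar V_1,\bar I_1,0)$, with $\bar S,\bar V_1,\bar I_1>0$, be a single-strain ($I_1$)-infection equilibrium of the model. Let $\bar{\mathcal{R}}_2=\frac{1}{\alpha_2}\frac{\partial F_2}{\partial I_2}(\bar S,0)+\frac{k\bar V_1}{\alpha_2}$. Then $E_1$ is unstable if $\bar{\mathcal{R}}_2>1$ and locally asymptotically stable if $\bar{\mathcal{R}}_2<1$.
   Context: The model is $\dot S=\Lambda-F_1(S,I_1)-F_2(S,I_2)-\lambda S$, $\dot V_1=rS-(\mu+kI_2)V_1$, $\dot I_1=F_1(S,I_1)-\alpha_1I_1$, $\dot I_2=F_2(S,I_2)+kI_2V_1-\alpha_2I_2$ on $\mathbb{R}^4_+$. The constants $\Lambda,\mu,r,k,\gamma_1,\gamma_2>0$ and $v_1,v_2\ge0$; $\lambda=r+\mu$ and $\alpha_i=\gamma_i+v_i+\mu$. For $i=1,2$ the incidence functions satisfy: - (H1) $F_i(S,I_i)=I_if_i(S,I_i)$ with $F_i,f_i\in C^2(\mathbb{R}^2_+,\mathbb{R}_+)$ and $F_i(0,I_i)=F_i(S,0)=0$; - (H2) $\partial f_i/\partial S>0$ and $\partial f_i/\partial I_i\le0$; - (H3) $\lim_{I_i\to0^+}F_i(S,I_i)/I_i$ exists and is positive for $S>0$. *)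

theory Defs
  imports "HOL-Analysis.Analysis"
begin

type_synonym state = "real \<times> real \<times> real \<times> real"

definition quadrant :: "(real \<times> real) set" where
  "quadrant = {(S, I). 0 \<le> S \<and> 0 \<le> I}"

definition orthant4 :: "state set" where
  "orthant4 = {(S, V, I1, I2). 0 \<le> S \<and> 0 \<le> V \<and> 0 \<le> I1 \<and> 0 \<le> I2}"

definition C2_on :: "(real \<times> real \<Rightarrow> real) \<Rightarrow> (real \<times> real) set \<Rightarrow> bool" where
  "C2_on F A \<longleftrightarrow> (\<exists>U F' F''. open U \<and> A \<subseteq> U \<and>
      (\<forall>x\<in>U. (F has_derivative blinfun_apply (F' x)) (at x)) \<and>
      (\<forall>x\<in>U. (F' has_derivative blinfun_apply (F'' x)) (at x)) \<and>
      continuous_on U F'')"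

definition pdS :: "(real \<times> real \<Rightarrow> real) \<Rightarrow> real \<Rightarrow> real \<Rightarrow> real" where
  "pdS F S I = deriv (\<lambda>s. F (s, I)) S"

definition pdI :: "(real \<times> real \<Rightarrow> real) \<Rightarrow> real \<Rightarrow> real \<Rightarrow> real" where
  "pdI F S I = deriv (\<lambda>y. F (S, y)) I"

text \<open>Hypotheses (H1)-(H3) on an incidence function F with F = I f.\<close>
definition incidence_hyp :: "(real \<times> real \<Rightarrow> real) \<Rightarrow> (real \<times> real \<Rightarrow> real) \<Rightarrow> bool" where
  "incidence_hyp F f \<longleftrightarrow>
     C2_on F quadrant \<and> C2_on f quadrant \<and>
     (\<forall>S I. (S, I) \<in> quadrant \<longrightarrow> F (S, I) = I * f (S, I) \<and> F (S, I) \<ge> 0 \<and> f (S, I) \<ge> 0) \<and>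
     (\<forall>I \<ge> 0. F (0, I) = 0) \<and> (\<forall>S \<ge> 0. F (S, 0) = 0) \<and>
     (\<forall>S I. (S, I) \<in> quadrant \<longrightarrow> pdS f S I > 0 \<and> pdI f S I \<le> 0) \<and>
     (\<forall>S > 0. \<exists>L > 0. ((\<lambda>I. F (S, I) / I) \<longlongrightarrow> L) (at_right 0))"

definition field :: "(real \<times> real \<Rightarrow> real) \<Rightarrow> (real \<times> real \<Rightarrow> real) \<Rightarrow>
    real \<Rightarrow> real \<Rightarrow> real \<Rightarrow> real \<Rightarrow> real \<Rightarrow> real \<Rightarrow> real \<Rightarrow> real \<Rightarrow> state \<Rightarrow> state" where
  "field F1 F2 Lam mu r k gamma1 gamma2 v1 v2 = (\<lambda>(S, V1, I1, I2).
     (let lam = r + mu; a1 = gamma1 + v1 + mu; a2 = gamma2 + v2 + mu in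
      (Lam - F1 (S, I1) - F2 (S, I2) - lam * S,
       r * S - (mu + k * I2) * V1,
       F1 (S, I1) - a1 * I1,
       F2 (S, I2) + k * I2 * V1 - a2 * I2)))"

definition is_solution :: "(state \<Rightarrow> state) \<Rightarrow> state set \<Rightarrow> (real \<Rightarrow> state) \<Rightarrow> bool" where
  "is_solution G D x \<longleftrightarrow>
     (\<forall>t \<ge> 0. x t \<in> D \<and> (x has_vector_derivative G (x t)) (at t within {0..}))"

definition lyap_stable :: "(state \<Rightarrow> state) \<Rightarrow> state set \<Rightarrow> state \<Rightarrow> bool" where
  "lyap_stable G D e \<longleftrightarrow>
     (\<forall>\<epsilon> > 0. \<exists>\<delta> > 0. \<forall>x. is_solution G D x \<and> dist (x 0) e < \<delta> \<longrightarrow>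
        (\<forall>t \<ge> 0. dist (x t) e < \<epsilon>))"

definition loc_asym_stable :: "(state \<Rightarrow> state) \<Rightarrow> state set \<Rightarrow> state \<Rightarrow> bool" where
  "loc_asym_stable G D e \<longleftrightarrow> lyap_stable G D e \<and>
     (\<exists>\<eta> > 0. \<forall>x. is_solution G D x \<and> dist (x 0) e < \<eta> \<longrightarrow> (x \<longlongrightarrow> e) at_top)"

definition unstable :: "(state \<Rightarrow> state) \<Rightarrow> state set \<Rightarrow> state \<Rightarrow> bool" where
  "unstable G D e \<longleftrightarrow> \<not> lyap_stable G D e"

end

(*
  Near E1 the I2-equation decouples to first order: I2' = I2 (f2(S, I2) + k V1 - alpha2), and at E1
  the bracket equals alpha2 (R2 - 1) because the I2-derivative of F2 = I2 f2 at (S, 0) is f2(S, 0).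

  If R2 > 1, I2 grows exponentially as long as the solution stays close to E1, so solutions
  starting with arbitrarily small I2 > 0 leave a fixed neighbourhood.  (Global solutions are
  obtained from a clipped, globally Lipschitz field by Bielecki's weighted Picard iteration.)

  If R2 < 1, I2 decays, V1 is driven by S through a stable scalar equation, and in the coordinates
  s = (S - Sb) + (I1 - Ib), w = I1 - Ib the linearised (S, I1)-block has negative trace and
  positive determinant by (H2).  The sum of the quadratic Lyapunov form of this 2 x 2 block, a
  small multiple of (V1 - Vb)^2, and I2 is a Lyapunov function W with W' <= -kappa W near E1.
*)
theory Submission
  imports Defs "HOL-Real_Asymp.Real_Asymp"
begin

section \<open>Scalar differential inequalities\<close>

lemma nonneg_if_deriv_nonneg_where_neg:
  fixes \<phi> :: "real \<Rightarrow> real"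
  assumes cont: "continuous_on {0..} \<phi>" and nonneg0: "\<phi> 0 \<ge> 0"
    and deriv: "\<And>t. t > 0 \<Longrightarrow> \<phi> t < 0 \<Longrightarrow> \<exists>y. (\<phi> has_real_derivative y) (at t) \<and> y \<ge> 0"
    and "t \<ge> 0"
  shows "\<phi> t \<ge> 0"
proof (rule ccontr)
  assume neg: "\<not> \<phi> t \<ge> 0"
  define A where "A = {0..t} \<inter> \<phi> -` {0..}"
  have "closed A" unfolding A_def
    by (rule continuous_closed_preimage) (auto intro: continuous_on_subset[OF cont])
  moreover have "0 \<in> A" "bdd_above A" using nonneg0 \<open>t \<ge> 0\<close> by (auto simp: A_def bdd_above_def)
  ultimately have "Sup A \<in> A" by (intro closed_contains_Sup) auto
  then have s: "0 \<le> Sup A" "Sup A < t" "\<phi> (Sup A) \<ge> 0"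
    using neg by (auto simp: A_def order.order_iff_strict)
  have after: "\<phi> u < 0" if "Sup A < u" "u \<le> t" for u
  proof (rule ccontr)
    assume "\<not> \<phi> u < 0"
    with that s have "u \<in> A" by (auto simp: A_def)
    from cSup_upper[OF this \<open>bdd_above A\<close>] that show False by simp
  qed
  have "\<phi> (Sup A) \<le> \<phi> t"
  proof (rule DERIV_nonneg_imp_increasing_open[of "Sup A" t])
    show "continuous_on {Sup A..t} \<phi>" by (rule continuous_on_subset[OF cont]) (use s in auto)
  qed (use s after deriv in auto)
  with neg s show False by simp
qed

lemma exp_bound_if_deriv_le_linear:
  fixes \<phi> :: "real \<Rightarrow> real"
  assumes cont: "continuous_on {0..T} \<phi>"
    and deriv: "\<And>t. 0 < t \<Longrightarrow> t < T \<Longrightarrow> \<exists>y. (\<phi> has_real_derivative y) (at t) \<and> y \<le> -\<kappa> * \<phi> t"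
    and "T \<ge> 0"
  shows "\<phi> T \<le> \<phi> 0 * exp (-\<kappa> * T)"
proof -
  define h where "h s = \<phi> s * exp (\<kappa> * s)" for s
  have "h T \<le> h 0"
  proof (rule DERIV_nonpos_imp_decreasing_open[of 0 T h])
    fix t assume "0 < t" "t < T"
    then obtain y where y: "(\<phi> has_real_derivative y) (at t)" "y \<le> -\<kappa> * \<phi> t"
      using deriv by blast
    have "(h has_real_derivative (y + \<kappa> * \<phi> t) * exp (\<kappa> * t)) (at t)"
      unfolding h_def by (auto intro!: derivative_eq_intros y(1) simp: algebra_simps)
    moreover have "(y + \<kappa> * \<phi> t) * exp (\<kappa> * t) \<le> 0"
      using y(2) by (simp add: mult_nonpos_nonneg)
    ultimately show "\<exists>y. (h has_real_derivative y) (at t) \<and> y \<le> 0" by blast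
  qed (use \<open>T \<ge> 0\<close> in \<open>auto simp: h_def intro!: continuous_intros cont\<close>)
  then have "\<phi> T * exp (\<kappa> * T) * exp (-\<kappa> * T) \<le> \<phi> 0 * exp (-\<kappa> * T)"
    by (simp add: h_def)
  then show ?thesis by (simp add: mult.assoc flip: exp_add)
qed

lemma exp_decay_in_sublevel:
  fixes \<phi> :: "real \<Rightarrow> real"
  assumes cont: "continuous_on {0..} \<phi>"
    and deriv: "\<And>t. t > 0 \<Longrightarrow> \<phi> t \<le> \<omega> \<Longrightarrow> \<exists>y. (\<phi> has_real_derivative y) (at t) \<and> y \<le> -\<kappa> * \<phi> t"
    and "0 \<le> \<phi> 0" "\<phi> 0 < \<omega>" "\<kappa> \<ge> 0" "t \<ge> 0"
  shows "\<phi> t \<le> \<phi> 0 * exp (-\<kappa> * t)"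
proof -
  have decay: "\<phi> t' \<le> \<phi> 0 * exp (-\<kappa> * t')" if "t' \<ge> 0" "\<forall>u\<in>{0<..<t'}. \<phi> u < \<omega>" for t'
  proof (rule exp_bound_if_deriv_le_linear[OF continuous_on_subset[OF cont] _ that(1)])
    fix u assume "0 < u" "u < t'"
    with that deriv show "\<exists>y. (\<phi> has_real_derivative y) (at u) \<and> y \<le> -\<kappa> * \<phi> u"
      by (simp add: less_imp_le)
  qed auto
  have small: "\<phi> 0 * exp (-\<kappa> * t') < \<omega>" if "t' \<ge> 0" for t'
    using assms that mult_left_le[of "exp (-\<kappa> * t')" "\<phi> 0"] by simp
  have below: "\<phi> t' < \<omega>" if "t' \<ge> 0" for t'
  proof (rule ccontr)
    assume "\<not> \<phi> t' < \<omega>"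
    define A where "A = {0..t'} \<inter> \<phi> -` {\<omega>..}"
    have "closed A" unfolding A_def
      by (rule continuous_closed_preimage) (auto intro: continuous_on_subset[OF cont])
    moreover have "t' \<in> A" "bdd_below A" using \<open>\<not> \<phi> t' < \<omega>\<close> that by (auto simp: A_def bdd_below_def)
    ultimately have "Inf A \<in> A" by (intro closed_contains_Inf) auto
    then have s: "0 \<le> Inf A" "\<phi> (Inf A) \<ge> \<omega>" by (auto simp: A_def)
    have "\<phi> u < \<omega>" if "0 < u" "u < Inf A" for u
      using that \<open>Inf A \<in> A\<close> cInf_lower[OF _ \<open>bdd_below A\<close>, of u] by (force simp: A_def)
    with decay[OF s(1)] small[OF s(1)] s(2) show False by auto
  qed
  show ?thesis using decay below \<open>t \<ge> 0\<close> by auto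
qed

section \<open>Global solutions of bounded Lipschitz equations\<close>

lemma continuous_on_integral_upto_max0:
  fixes g :: "real \<Rightarrow> 'a::banach"
  assumes "continuous_on UNIV g"
  shows "continuous_on UNIV (\<lambda>t. integral {0..max t 0} g)"
proof (rule continuous_at_imp_continuous_on, intro ballI)
  fix t0 :: real
  define b where "b = \<bar>t0\<bar> + 1"
  have "continuous_on {0..b} (\<lambda>u. integral {0..u} g)"
    by (intro indefinite_integral_continuous_1 integrable_continuous_real
        continuous_on_subset[OF assms]) auto
  then have "continuous_on {-b..b} ((\<lambda>u. integral {0..u} g) \<circ> (\<lambda>t. max t 0))"
    by (intro continuous_on_compose continuous_intros) (auto simp: b_def elim: continuous_on_subset)
  moreover have "t0 \<in> interior {-b..b}" by (simp add: b_def) arith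
  ultimately show "isCont (\<lambda>t. integral {0..max t 0} g) t0"
    by (auto dest: continuous_on_interior simp: o_def)
qed

text \<open>Bielecki's trick: in the variable \<open>y(t) = e\<^sup>-\<^sup>2\<^sup>L\<^sup>t x(t)\<close> the Picard operator of
  \<open>x' = H x\<close>, frozen at \<open>t = 0\<close> for negative \<open>t\<close>, is a contraction with constant \<open>1/2\<close> on all
  bounded continuous functions on \<open>\<real>\<close>, so a single fixed point gives a solution on the whole
  half-line.\<close>

definition bielecki_picard :: "('a::banach \<Rightarrow> 'a) \<Rightarrow> real \<Rightarrow> 'a \<Rightarrow> (real \<Rightarrow> 'a) \<Rightarrow> real \<Rightarrow> 'a" where
  "bielecki_picard H L x0 y t =
     exp (- (2 * L) * max t 0) *\<^sub>R (x0 + integral {0..max t 0} (\<lambda>s. H (exp (2 * L * s) *\<^sub>R y s)))"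

lemma exp_weight_has_integral:
  fixes L c \<tau> :: real
  assumes "L > 0" "\<tau> \<ge> 0"
  shows "((\<lambda>s. L * c * exp (2 * L * s)) has_integral (c / 2 * exp (2 * L * \<tau>) - c / 2)) {0..\<tau>}"
proof -
  have "((\<lambda>s. L * c * exp (2 * L * s)) has_integral
      (c / 2 * exp (2 * L * \<tau>) - c / 2 * exp (2 * L * 0))) {0..\<tau>}"
    by (intro fundamental_theorem_of_calculus \<open>\<tau> \<ge> 0\<close>)
      (auto intro!: derivative_eq_intros simp flip: has_real_derivative_iff_has_vector_derivative)
  then show ?thesis by simp
qed

lemma bielecki_picard_bounded:
  fixes H :: "'a::banach \<Rightarrow> 'a"
  assumes "continuous_on UNIV H" "\<And>x. norm (H x) \<le> B" "L > 0" "continuous_on UNIV y"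
  shows "bielecki_picard H L x0 y \<in> bcontfun"
proof (rule bcontfun_normI)
  have B: "B \<ge> 0" using assms(2) norm_ge_zero order_trans by blast
  show "continuous_on UNIV (bielecki_picard H L x0 y)" unfolding bielecki_picard_def
    by (intro continuous_intros continuous_on_integral_upto_max0
        continuous_on_compose2[OF assms(1)] assms(4)) auto
  fix t :: real
  define \<tau> where "\<tau> = max t 0"
  have "\<tau> \<ge> 0" by (simp add: \<tau>_def)
  have "continuous_on UNIV (\<lambda>s. H (exp (2 * L * s) *\<^sub>R y s))"
    by (intro continuous_on_compose2[OF assms(1)] continuous_intros assms(4)) auto
  then have int: "norm (integral {0..\<tau>} (\<lambda>s. H (exp (2 * L * s) *\<^sub>R y s))) \<le> B * \<tau>"
    using integral_bound[OF \<open>\<tau> \<ge> 0\<close> _ assms(2)] continuous_on_subset by fastforce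
  have "2 * L * \<tau> \<le> exp (2 * L * \<tau>)" using exp_ge_add_one_self[of "2 * L * \<tau>"] by linarith
  then have weighted_time: "exp (- (2 * L) * \<tau>) * \<tau> \<le> 1 / (2 * L)"
    using \<open>L > 0\<close> by (simp add: exp_minus field_simps)
  have "norm (x0 + integral {0..\<tau>} (\<lambda>s. H (exp (2 * L * s) *\<^sub>R y s))) \<le> norm x0 + B * \<tau>"
    using norm_triangle_ineq[of x0] int by (meson add_left_mono order_trans)
  then have "norm (bielecki_picard H L x0 y t) \<le> exp (- (2 * L) * \<tau>) * (norm x0 + B * \<tau>)"
    unfolding bielecki_picard_def \<tau>_def[symmetric] by (simp add: mult_left_mono)
  also have "\<dots> = exp (- (2 * L) * \<tau>) * norm x0 + B * (exp (- (2 * L) * \<tau>) * \<tau>)"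
    by (simp add: algebra_simps)
  also have "\<dots> \<le> norm x0 + B * (1 / (2 * L))"
    using \<open>\<tau> \<ge> 0\<close> \<open>L > 0\<close> B
    by (intro add_mono mult_left_mono weighted_time) (auto intro: mult_left_le_one_le)
  finally show "norm (bielecki_picard H L x0 y t) \<le> norm x0 + B / (2 * L)" by simp
qed

lemma bielecki_picard_contraction:
  fixes H :: "'a::banach \<Rightarrow> 'a"
  assumes lip: "L-lipschitz_on UNIV H" and "L > 0"
    and cont: "continuous_on UNIV y1" "continuous_on UNIV y2"
    and bound: "\<And>t. dist (y1 t) (y2 t) \<le> d"
  shows "dist (bielecki_picard H L x0 y1 t) (bielecki_picard H L x0 y2 t) \<le> d / 2"
proof -
  define \<tau> where "\<tau> = max t 0"
  have "\<tau> \<ge> 0" by (simp add: \<tau>_def)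
  have d: "d \<ge> 0" using bound[of 0] zero_le_dist order_trans by blast
  have Hc: "continuous_on UNIV H" using lip by (rule lipschitz_on_continuous_on)
  define g where "g y = (\<lambda>s. H (exp (2 * L * s) *\<^sub>R y s))" for y
  have g_int: "g y integrable_on {0..\<tau>}" if "continuous_on UNIV y" for y
    unfolding g_def using that
    by (intro integrable_continuous_real continuous_on_compose2[OF Hc] continuous_intros)
      (auto intro: continuous_on_subset)
  have "norm (integral {0..\<tau>} (\<lambda>s. g y1 s - g y2 s))
      \<le> integral {0..\<tau>} (\<lambda>s. L * d * exp (2 * L * s))"
  proof (rule integral_norm_bound_integral)
    fix s assume "s \<in> {0..\<tau>}"
    have "norm (g y1 s - g y2 s) \<le> L * dist (exp (2 * L * s) *\<^sub>R y1 s) (exp (2 * L * s) *\<^sub>R y2 s)"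
      unfolding g_def dist_norm[symmetric] by (rule lipschitz_onD[OF lip]) auto
    also have "\<dots> \<le> L * (exp (2 * L * s) * d)"
      using bound[of s] \<open>L > 0\<close> by (auto simp: dist_norm simp flip: scaleR_diff_right)
    finally show "norm (g y1 s - g y2 s) \<le> L * d * exp (2 * L * s)" by (simp add: algebra_simps)
  qed (use g_int cont exp_weight_has_integral[OF \<open>L > 0\<close> \<open>\<tau> \<ge> 0\<close>] in
      \<open>auto intro: integrable_diff has_integral_integrable\<close>)
  also have "\<dots> = d / 2 * exp (2 * L * \<tau>) - d / 2"
    using exp_weight_has_integral[OF \<open>L > 0\<close> \<open>\<tau> \<ge> 0\<close>] by (rule integral_unique)
  finally have "norm (integral {0..\<tau>} (g y1) - integral {0..\<tau>} (g y2)) \<le> d / 2 * exp (2 * L * \<tau>) - d / 2"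
    using g_int cont by (simp add: integral_diff)
  then have "exp (- (2 * L) * \<tau>) * norm (integral {0..\<tau>} (g y1) - integral {0..\<tau>} (g y2))
      \<le> exp (- (2 * L) * \<tau>) * (d / 2 * exp (2 * L * \<tau>) - d / 2)"
    by (rule mult_left_mono) simp
  also have "\<dots> \<le> d / 2" using d by (simp add: algebra_simps flip: exp_add)
  finally show ?thesis
    by (simp add: bielecki_picard_def \<tau>_def[symmetric] g_def dist_norm flip: scaleR_diff_right)
qed

lemma has_vector_derivative_if_integral_eq:
  fixes g :: "real \<Rightarrow> 'a::banach"
  assumes "continuous_on UNIV g" and x: "\<And>t. t \<ge> 0 \<Longrightarrow> x t = x0 + integral {0..t} g" and "t \<ge> 0"
  shows "(x has_vector_derivative g t) (at t within {0..})"
proof -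
  have "((\<lambda>u. x0 + integral {0..u} g) has_vector_derivative g t) (at t within {0..t + 1})"
    using assms
    by (auto intro!: derivative_eq_intros integral_has_vector_derivative intro: continuous_on_subset)
  then have "(x has_vector_derivative g t) (at t within {0..t + 1})"
    by (rule has_vector_derivative_transform[rotated 2]) (use x \<open>t \<ge> 0\<close> in auto)
  moreover have "at t within {0..t + 1} = at t within {0..}"
    by (rule at_within_nhd[of _ "{..<t + 1}"]) auto
  ultimately show ?thesis by simp
qed

lemma global_solution_if_lipschitz_bounded:
  fixes H :: "'a::banach \<Rightarrow> 'a"
  assumes lip: "L-lipschitz_on UNIV H" and bound: "\<And>x. norm (H x) \<le> B"
  shows "\<exists>x. x 0 = x0 \<and> (\<forall>t\<ge>0. (x has_vector_derivative H (x t)) (at t within {0..}))"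
proof -
  define L' where "L' = L + 1"
  have "L \<ge> 0" using lip by (rule lipschitz_on_nonneg)
  then have "L' > 0" "L'-lipschitz_on UNIV H"
    using lipschitz_on_mono[OF lip] by (auto simp: L'_def)
  note lip' = this(2)
  have Hc: "continuous_on UNIV H" using lip by (rule lipschitz_on_continuous_on)
  define \<Phi> where "\<Phi> y = Bcontfun (bielecki_picard H L' x0 (apply_bcontfun y))" for y
  have \<Phi>: "apply_bcontfun (\<Phi> y) = bielecki_picard H L' x0 (apply_bcontfun y)" for y
    unfolding \<Phi>_def using bielecki_picard_bounded[OF Hc bound \<open>L' > 0\<close>]
    by (simp add: Bcontfun_inverse)
  have "dist (\<Phi> y1) (\<Phi> y2) \<le> 1/2 * dist y1 y2" for y1 y2
    using bielecki_picard_contraction[OF lip' \<open>L' > 0\<close> _ _ dist_bounded[of y1 _ y2]]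
    by (intro dist_bound) (simp add: \<Phi> continuous_on_apply_bcontfun)
  then obtain y where "\<Phi> y = y" using banach_fix_type[of "1/2" \<Phi>] by auto
  define x where "x t = exp (2 * L' * t) *\<^sub>R apply_bcontfun y t" for t
  have integral_eq: "x t = x0 + integral {0..t} (\<lambda>s. H (x s))" if "t \<ge> 0" for t
  proof -
    have "apply_bcontfun y t = exp (- (2 * L') * t) *\<^sub>R (x0 + integral {0..t} (\<lambda>s. H (x s)))"
      using arg_cong[OF \<open>\<Phi> y = y\<close>, of "\<lambda>y. apply_bcontfun y t"] that
      by (simp add: \<Phi> x_def bielecki_picard_def)
    then show ?thesis by (simp add: x_def flip: exp_add)
  qed
  have "continuous_on UNIV (\<lambda>s. H (x s))"
    unfolding x_def by (intro continuous_on_compose2[OF Hc] continuous_intros) auto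
  from has_vector_derivative_if_integral_eq[OF this integral_eq]
  have "\<forall>t\<ge>0. (x has_vector_derivative H (x t)) (at t within {0..})" by blast
  moreover have "x 0 = x0" using integral_eq[of 0] by simp
  ultimately show ?thesis by blast
qed

section \<open>Solutions and Lyapunov functions on the state space\<close>

lemma dist_Pair_le_sum_abs: "dist ((a, b) :: real \<times> real) (a', b') \<le> \<bar>a - a'\<bar> + \<bar>b - b'\<bar>"
  using norm_Pair_le[of "a - a'" "b - b'"] by (simp add: dist_norm)

lemma dist_state_le_sum_abs:
  "dist ((a, b, c, d) :: state) (a', b', c', d') \<le> \<bar>a - a'\<bar> + \<bar>b - b'\<bar> + \<bar>c - c'\<bar> + \<bar>d - d'\<bar>"
proof -
  have "dist ((a, b, c, d) :: state) (a', b', c', d') \<le> dist a a' + dist (b, c, d) (b', c', d')"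
    using norm_Pair_le[of "a - a'" "(b, c, d) - (b', c', d')"] by (simp add: dist_norm)
  also have "dist (b, c, d) (b', c', d') \<le> dist b b' + dist (c, d) (c', d')"
    using norm_Pair_le[of "b - b'" "(c, d) - (c', d')"] by (simp add: dist_norm)
  finally show ?thesis using dist_Pair_le_sum_abs[of c d c' d'] by (simp add: dist_real_def)
qed

lemma abs_diff_le_dist_state:
  fixes p q :: state
  shows "\<bar>fst p - fst q\<bar> \<le> dist p q"
    and "\<bar>fst (snd p) - fst (snd q)\<bar> \<le> dist p q"
    and "\<bar>fst (snd (snd p)) - fst (snd (snd q))\<bar> \<le> dist p q"
    and "\<bar>snd (snd (snd p)) - snd (snd (snd q))\<bar> \<le> dist p q"
proof -
  have "dist (snd p) (snd q) \<le> dist p q" "dist (snd (snd p)) (snd (snd q)) \<le> dist (snd p) (snd q)"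
    by (rule dist_snd_le)+
  note chain = this dist_fst_le[of p q] dist_fst_le[of "snd p" "snd q"]
    dist_fst_le[of "snd (snd p)" "snd (snd q)"] dist_snd_le[of "snd (snd p)" "snd (snd q)"]
  show "\<bar>fst p - fst q\<bar> \<le> dist p q" using chain by (simp add: dist_real_def)
  show "\<bar>fst (snd p) - fst (snd q)\<bar> \<le> dist p q" using chain by (simp add: dist_real_def)
  show "\<bar>fst (snd (snd p)) - fst (snd (snd q))\<bar> \<le> dist p q" using chain by (simp add: dist_real_def)
  show "\<bar>snd (snd (snd p)) - snd (snd (snd q))\<bar> \<le> dist p q" using chain by (simp add: dist_real_def)
qed

lemma dist_S_I2_le_dist_state:
  fixes p q :: state
  shows "dist (fst p, snd (snd (snd p))) (fst q, snd (snd (snd q))) \<le> dist p q"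
  by (cases p, cases q) (simp add: dist_Pair_Pair real_sqrt_le_mono)

lemma bounded_linear_state_coordinates:
  shows "bounded_linear (\<lambda>q::state. fst q)"
    and "bounded_linear (\<lambda>q::state. fst (snd q))"
    and "bounded_linear (\<lambda>q::state. fst (snd (snd q)))"
    and "bounded_linear (\<lambda>q::state. snd (snd (snd q)))"
  by (auto intro!: bounded_linear_compose[OF bounded_linear_fst]
      bounded_linear_compose[OF bounded_linear_snd] bounded_linear_fst bounded_linear_snd)

lemma has_vector_derivative_state_components:
  fixes x :: "real \<Rightarrow> state"
  assumes "(x has_vector_derivative v) (at t)"
  shows "((\<lambda>t. fst (x t)) has_real_derivative fst v) (at t)"
    and "((\<lambda>t. fst (snd (x t))) has_real_derivative fst (snd v)) (at t)"
    and "((\<lambda>t. fst (snd (snd (x t)))) has_real_derivative fst (snd (snd v))) (at t)"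
    and "((\<lambda>t. snd (snd (snd (x t)))) has_real_derivative snd (snd (snd v))) (at t)"
proof -
  from bounded_linear_state_coordinates[THEN bounded_linear.has_vector_derivative, OF assms] show
    "((\<lambda>t. fst (x t)) has_real_derivative fst v) (at t)"
    "((\<lambda>t. fst (snd (x t))) has_real_derivative fst (snd v)) (at t)"
    "((\<lambda>t. fst (snd (snd (x t)))) has_real_derivative fst (snd (snd v))) (at t)"
    "((\<lambda>t. snd (snd (snd (x t)))) has_real_derivative snd (snd (snd v))) (at t)"
    by (simp_all add: has_real_derivative_iff_has_vector_derivative)
qed

lemma
  fixes x :: "real \<Rightarrow> 'a::real_normed_vector"
  assumes deriv: "\<And>t. t \<ge> 0 \<Longrightarrow> (x has_vector_derivative v t) (at t within {0..})"
  shows continuous_on_half_line_if_has_vector_derivative: "continuous_on {0..} x"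
    and has_vector_derivative_at_if_half_line: "t > 0 \<Longrightarrow> (x has_vector_derivative v t) (at t)"
proof -
  show "continuous_on {0..} x"
    unfolding continuous_on_eq_continuous_within
  proof
    fix t :: real assume "t \<in> {0..}"
    with deriv[of t] show "continuous (at t within {0..}) x"
      using has_vector_derivative_continuous by auto
  qed
  assume "t > 0"
  then have "(x has_vector_derivative v t) (at t within {0<..})"
    by (intro has_vector_derivative_within_subset[OF deriv]) auto
  with \<open>t > 0\<close> show "(x has_vector_derivative v t) (at t)"
    by (subst (asm) has_vector_derivative_within_open) auto
qed

lemma
  assumes "is_solution G D x"
  shows is_solution_continuous: "continuous_on {0..} x"
    and is_solution_has_vector_derivative: "t > 0 \<Longrightarrow> (x has_vector_derivative G (x t)) (at t)"
    and is_solution_in_domain: "t \<ge> 0 \<Longrightarrow> x t \<in> D"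
proof -
  have deriv: "\<And>t. t \<ge> 0 \<Longrightarrow> (x has_vector_derivative G (x t)) (at t within {0..})"
    using assms by (simp add: is_solution_def)
  show "continuous_on {0..} x" by (rule continuous_on_half_line_if_has_vector_derivative[OF deriv])
  show "t > 0 \<Longrightarrow> (x has_vector_derivative G (x t)) (at t)"
    by (rule has_vector_derivative_at_if_half_line[OF deriv])
  show "t \<ge> 0 \<Longrightarrow> x t \<in> D" using assms by (simp add: is_solution_def)
qed

locale exp_lyapunov_function =
  fixes G :: "state \<Rightarrow> state" and D :: "state set" and e :: state and W :: "state \<Rightarrow> real"
    and \<omega>\<^sub>0 \<kappa> :: real
  assumes W_cont: "continuous_on UNIV W" and W_e: "W e = 0" and W_nonneg: "\<And>q. q \<in> D \<Longrightarrow> 0 \<le> W q"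
    and W_small: "\<And>\<epsilon>. \<epsilon> > 0 \<Longrightarrow> \<exists>\<omega>>0. \<forall>q\<in>D. W q \<le> \<omega> \<longrightarrow> dist q e < \<epsilon>"
    and \<omega>\<^sub>0_pos: "\<omega>\<^sub>0 > 0" and \<kappa>_pos: "\<kappa> > 0"
    and W_decay: "\<And>x t. is_solution G D x \<Longrightarrow> t > 0 \<Longrightarrow> W (x t) \<le> \<omega>\<^sub>0 \<Longrightarrow>
       \<exists>y. ((\<lambda>t. W (x t)) has_real_derivative y) (at t) \<and> y \<le> -\<kappa> * W (x t)"
begin

lemma exp_decay:
  assumes "0 < \<omega>" "\<omega> \<le> \<omega>\<^sub>0"
  obtains \<delta> where "\<delta> > 0" and "\<And>x t. is_solution G D x \<Longrightarrow> dist (x 0) e < \<delta> \<Longrightarrow> t \<ge> 0 \<Longrightarrow>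
    W (x t) \<le> W (x 0) * exp (-\<kappa> * t) \<and> W (x t) < \<omega>"
proof -
  obtain \<delta> where "\<delta> > 0" and \<delta>: "\<And>q. dist q e < \<delta> \<Longrightarrow> W q < \<omega>"
    using W_cont \<open>\<omega> > 0\<close> W_e unfolding continuous_on_eq_continuous_at[OF open_UNIV]
      continuous_at_eps_delta by (metis UNIV_I diff_zero dist_real_def abs_less_iff)
  have "W (x t) \<le> W (x 0) * exp (-\<kappa> * t) \<and> W (x t) < \<omega>"
    if x: "is_solution G D x" "dist (x 0) e < \<delta>" and "t \<ge> 0" for x t
  proof
    have "W (x 0) \<ge> 0" using W_nonneg is_solution_in_domain[OF x(1)] by simp
    show decay: "W (x t) \<le> W (x 0) * exp (-\<kappa> * t)"
    proof (rule exp_decay_in_sublevel[where \<omega> = \<omega>])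
      show "continuous_on {0..} (\<lambda>t. W (x t))"
        using is_solution_continuous[OF x(1)] by (rule continuous_on_compose2[OF W_cont]) auto
      show "\<exists>y. ((\<lambda>t. W (x t)) has_real_derivative y) (at s) \<and> y \<le> -\<kappa> * W (x s)"
        if "s > 0" "W (x s) \<le> \<omega>" for s
        using W_decay[OF x(1) that(1)] that(2) \<open>\<omega> \<le> \<omega>\<^sub>0\<close> by simp
    qed (use \<open>t \<ge> 0\<close> \<open>W (x 0) \<ge> 0\<close> \<delta>[OF x(2)] \<kappa>_pos in simp_all)
    also have "\<dots> \<le> W (x 0)" using \<open>W (x 0) \<ge> 0\<close> \<kappa>_pos \<open>t \<ge> 0\<close> by (simp add: mult_left_le)
    also have "\<dots> < \<omega>" using \<delta> x(2) .
    finally show "W (x t) < \<omega>" .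
  qed
  with \<open>\<delta> > 0\<close> that show ?thesis by blast
qed

lemma lyap_stable: "lyap_stable G D e"
  unfolding lyap_stable_def
proof (intro allI impI)
  fix \<epsilon> :: real assume "\<epsilon> > 0"
  then obtain \<omega> where "\<omega> > 0" and \<omega>: "\<forall>q\<in>D. W q \<le> \<omega> \<longrightarrow> dist q e < \<epsilon>" using W_small by blast
  have "0 < min \<omega> \<omega>\<^sub>0" "min \<omega> \<omega>\<^sub>0 \<le> \<omega>\<^sub>0" using \<open>\<omega> > 0\<close> \<omega>\<^sub>0_pos by auto
  then obtain \<delta> where "\<delta> > 0" and \<delta>: "\<And>x t. is_solution G D x \<Longrightarrow> dist (x 0) e < \<delta> \<Longrightarrow> t \<ge> 0 \<Longrightarrow>
      W (x t) \<le> W (x 0) * exp (-\<kappa> * t) \<and> W (x t) < min \<omega> \<omega>\<^sub>0"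
    by (rule exp_decay) (rule that)
  have "dist (x t) e < \<epsilon>" if "is_solution G D x" "dist (x 0) e < \<delta>" "t \<ge> 0" for x t
    using \<delta>[OF that] \<omega> is_solution_in_domain[OF that(1,3)] by simp
  with \<open>\<delta> > 0\<close> show "\<exists>\<delta>>0. \<forall>x. is_solution G D x \<and> dist (x 0) e < \<delta> \<longrightarrow> (\<forall>t\<ge>0. dist (x t) e < \<epsilon>)"
    by blast
qed

lemma attractive: "\<exists>\<eta>>0. \<forall>x. is_solution G D x \<and> dist (x 0) e < \<eta> \<longrightarrow> (x \<longlongrightarrow> e) at_top"
proof -
  obtain \<delta> where "\<delta> > 0" and \<delta>: "\<And>x t. is_solution G D x \<Longrightarrow> dist (x 0) e < \<delta> \<Longrightarrow> t \<ge> 0 \<Longrightarrow>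
      W (x t) \<le> W (x 0) * exp (-\<kappa> * t) \<and> W (x t) < \<omega>\<^sub>0"
    by (rule exp_decay[OF \<omega>\<^sub>0_pos order_refl]) (rule that)
  have "(x \<longlongrightarrow> e) at_top" if "is_solution G D x" "dist (x 0) e < \<delta>" for x
  proof (rule tendstoI)
    fix \<epsilon> :: real assume "\<epsilon> > 0"
    then obtain \<omega> where "\<omega> > 0" and \<omega>: "\<forall>q\<in>D. W q \<le> \<omega> \<longrightarrow> dist q e < \<epsilon>" using W_small by blast
    have "((\<lambda>t. W (x 0) * exp (-\<kappa> * t)) \<longlongrightarrow> 0) at_top"
      using \<kappa>_pos by real_asymp
    then have "eventually (\<lambda>t. W (x 0) * exp (-\<kappa> * t) < \<omega> \<and> t \<ge> 0) at_top"
      using \<open>\<omega> > 0\<close> by (intro eventually_conj order_tendstoD(2) eventually_ge_at_top) auto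
    then show "eventually (\<lambda>t. dist (x t) e < \<epsilon>) at_top"
    proof eventually_elim
      case (elim t)
      with \<delta>[OF that, of t] have "W (x t) \<le> \<omega>" by simp
      with \<omega> is_solution_in_domain[OF that(1)] elim show ?case by auto
    qed
  qed
  with \<open>\<delta> > 0\<close> show ?thesis by blast
qed

theorem loc_asym_stable: "loc_asym_stable G D e"
  unfolding loc_asym_stable_def using lyap_stable attractive by blast

end

section \<open>Incidence functions\<close>

lemma C2_on_imp_C1_on:
  assumes "C2_on F A"
  obtains U F' where "open U" "A \<subseteq> U" "\<And>x. x \<in> U \<Longrightarrow> (F has_derivative blinfun_apply (F' x)) (at x)"
    "continuous_on U F'"
proof -
  obtain U F' F'' where U: "open U" "A \<subseteq> U" "\<forall>x\<in>U. (F has_derivative blinfun_apply (F' x)) (at x)"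
    "\<forall>x\<in>U. (F' has_derivative blinfun_apply (F'' x)) (at x)"
    using assms unfolding C2_on_def by blast
  have "continuous_on U F'"
    using U(4) by (intro continuous_at_imp_continuous_on) (auto intro: has_derivative_continuous)
  with U that show ?thesis by blast
qed

lemma C2_on_lipschitz_on_compact_convex:
  assumes "C2_on F A" "compact K" "convex K" "K \<subseteq> A"
  obtains C where "C-lipschitz_on K F"
proof -
  obtain U F' where U: "open U" "A \<subseteq> U" "\<And>x. x \<in> U \<Longrightarrow> (F has_derivative blinfun_apply (F' x)) (at x)"
    "continuous_on U F'"
    using C2_on_imp_C1_on[OF assms(1)] by blast
  have "compact (F' ` K)"
    using assms U by (intro compact_continuous_image) (auto intro: continuous_on_subset)
  then obtain C where "C > 0" "\<And>y. y \<in> F' ` K \<Longrightarrow> norm y \<le> C"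
    using compact_imp_bounded bounded_pos by metis
  then have C: "C \<ge> 0" "\<And>x. x \<in> K \<Longrightarrow> norm (F' x) \<le> C" by auto
  have "C-lipschitz_on K F"
  proof (rule bounded_derivative_imp_lipschitz[OF _ \<open>convex K\<close> _ \<open>C \<ge> 0\<close>])
    fix x assume "x \<in> K"
    with U(2) assms(4) have "x \<in> U" by blast
    then show "(F has_derivative blinfun_apply (F' x)) (at x within K)"
      by (rule has_derivative_at_withinI[OF U(3)])
    show "onorm (blinfun_apply (F' x)) \<le> C" using C(2)[OF \<open>x \<in> K\<close>] by (simp add: norm_blinfun.rep_eq)
  qed
  then show ?thesis by (rule that)
qed

lemma has_derivative_Pair_partials:
  fixes F :: "real \<times> real \<Rightarrow> real"
  assumes deriv: "(F has_derivative F') (at (a, b))"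
  shows "F' (u, w) = u * F' (1, 0) + w * F' (0, 1)"
    and "((\<lambda>s. F (s, b)) has_real_derivative F' (1, 0)) (at a)"
    and "((\<lambda>y. F (a, y)) has_real_derivative F' (0, 1)) (at b)"
proof -
  interpret linear F' using has_derivative_bounded_linear[OF deriv] by (rule bounded_linear.linear)
  have lin: "F' (u, w) = u * F' (1, 0) + w * F' (0, 1)" for u w
    using add[of "u *\<^sub>R (1, 0)" "w *\<^sub>R (0, 1)"] scale[of u "(1, 0)"] scale[of w "(0, 1)"] by simp
  then show "F' (u, w) = u * F' (1, 0) + w * F' (0, 1)" .
  have "((\<lambda>s. (s, b)) has_derivative (\<lambda>h. (h, 0))) (at a)"
    by (auto intro!: derivative_eq_intros)
  from diff_chain_at[OF this deriv]
  have "((\<lambda>s. F (s, b)) has_derivative (\<lambda>h. F' (h, 0))) (at a)" by (simp add: o_def)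
  moreover have "(\<lambda>h. F' (h, 0)) = (*) (F' (1, 0))"
  proof
    show "F' (h, 0) = F' (1, 0) * h" for h using lin[of h 0] by simp
  qed
  ultimately show "((\<lambda>s. F (s, b)) has_real_derivative F' (1, 0)) (at a)"
    by (simp add: has_field_derivative_def)
  have "((\<lambda>y. (a, y)) has_derivative (\<lambda>h. (0, h))) (at b)"
    by (auto intro!: derivative_eq_intros)
  from diff_chain_at[OF this deriv]
  have "((\<lambda>y. F (a, y)) has_derivative (\<lambda>h. F' (0, h))) (at b)" by (simp add: o_def)
  moreover have "(\<lambda>h. F' (0, h)) = (*) (F' (0, 1))"
  proof
    show "F' (0, h) = F' (0, 1) * h" for h using lin[of 0 h] by simp
  qed
  ultimately show "((\<lambda>y. F (a, y)) has_real_derivative F' (0, 1)) (at b)"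
    by (simp add: has_field_derivative_def)
qed

lemma
  assumes "incidence_hyp F f"
  shows incidence_eq_mult: "S \<ge> 0 \<Longrightarrow> I \<ge> 0 \<Longrightarrow> F (S, I) = I * f (S, I)"
    and incidence_factor_nonneg: "S \<ge> 0 \<Longrightarrow> I \<ge> 0 \<Longrightarrow> f (S, I) \<ge> 0"
    and incidence_S_zero: "I \<ge> 0 \<Longrightarrow> F (0, I) = 0"
    and incidence_I_zero: "S \<ge> 0 \<Longrightarrow> F (S, 0) = 0"
  using assms by (auto simp: incidence_hyp_def quadrant_def)

lemma incidence_has_derivative:
  assumes "incidence_hyp F f" "S \<ge> 0" "I \<ge> 0"
  obtains F' f' where "(F has_derivative F') (at (S, I))" "(f has_derivative f') (at (S, I))"
proof -
  have "(S, I) \<in> quadrant" using assms by (simp add: quadrant_def)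
  moreover obtain U F' where "quadrant \<subseteq> U" "\<And>x. x \<in> U \<Longrightarrow> (F has_derivative blinfun_apply (F' x)) (at x)"
    using assms(1) C2_on_imp_C1_on unfolding incidence_hyp_def by metis
  moreover obtain V f' where "quadrant \<subseteq> V" "\<And>x. x \<in> V \<Longrightarrow> (f has_derivative blinfun_apply (f' x)) (at x)"
    using assms(1) C2_on_imp_C1_on unfolding incidence_hyp_def by metis
  ultimately show ?thesis using that by blast
qed

lemma incidence_linearization:
  assumes H: "incidence_hyp F f" and "S > 0" "I > 0"
  shows "(F has_derivative (\<lambda>(u, w). pdS F S I * u + pdI F S I * w)) (at (S, I))"
    and "pdS F S I > 0" and "pdI F S I \<le> f (S, I)"
proof -
  obtain F' f' where F': "(F has_derivative F') (at (S, I))" and f': "(f has_derivative f') (at (S, I))"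
    using incidence_has_derivative[OF H] \<open>S > 0\<close> \<open>I > 0\<close> by (metis less_imp_le)
  note PF = has_derivative_Pair_partials[OF F'] and Pf = has_derivative_Pair_partials[OF f']
  have F_eq: "F (s, y) = y * f (s, y)" if "s > 0" "y > 0" for s y
    using incidence_eq_mult[OF H] that by simp
  have dS: "((\<lambda>s. F (s, I)) has_real_derivative I * f' (1, 0)) (at S)"
    by (rule has_field_derivative_transform_within_open[OF DERIV_cmult[OF Pf(2)], of "{0<..}"])
      (use \<open>S > 0\<close> \<open>I > 0\<close> in \<open>auto simp: F_eq\<close>)
  have pdS_F: "F' (1, 0) = I * f' (1, 0)" "pdS F S I = I * f' (1, 0)"
    using DERIV_unique[OF PF(2) dS] dS by (simp_all add: pdS_def DERIV_imp_deriv)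
  have dI: "((\<lambda>y. F (S, y)) has_real_derivative 1 * f (S, I) + f' (0, 1) * I) (at I)"
    by (rule has_field_derivative_transform_within_open[OF DERIV_mult[OF DERIV_ident Pf(3)],
          of "{0<..}"])
      (use \<open>S > 0\<close> \<open>I > 0\<close> in \<open>auto simp: F_eq\<close>)
  have pdI_F: "F' (0, 1) = f (S, I) + I * f' (0, 1)" "pdI F S I = f (S, I) + I * f' (0, 1)"
    using DERIV_unique[OF PF(3) dI] dI by (simp_all add: pdI_def DERIV_imp_deriv mult.commute)
  have "pdS f S I = f' (1, 0)" "pdI f S I = f' (0, 1)"
    using Pf(2,3) by (simp_all add: pdS_def pdI_def DERIV_imp_deriv)
  moreover have "pdS f S I > 0" "pdI f S I \<le> 0"
    using H \<open>S > 0\<close> \<open>I > 0\<close> by (auto simp: incidence_hyp_def quadrant_def)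
  ultimately show "pdS F S I > 0" "pdI F S I \<le> f (S, I)"
    using pdS_F pdI_F \<open>I > 0\<close> by (simp_all add: mult_nonneg_nonpos)
  have "F' = (\<lambda>(u, w). pdS F S I * u + pdI F S I * w)"
  proof
    show "F' p = (\<lambda>(u, w). pdS F S I * u + pdI F S I * w) p" for p
      using PF(1)[of "fst p" "snd p"] pdS_F pdI_F by (simp add: split_beta mult.commute)
  qed
  with F' show "(F has_derivative (\<lambda>(u, w). pdS F S I * u + pdI F S I * w)) (at (S, I))" by simp
qed

lemma incidence_pdI_at_zero:
  assumes H: "incidence_hyp F f" and "S > 0"
  shows "pdI F S 0 = f (S, 0)" and "isCont f (S, 0)"
proof -
  obtain F' f' where F': "(F has_derivative F') (at (S, 0))" and f': "(f has_derivative f') (at (S, 0))"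
    using incidence_has_derivative[OF H] \<open>S > 0\<close> by (metis less_imp_le order_refl)
  show cont: "isCont f (S, 0)" using f' by (rule has_derivative_continuous)
  \<comment> \<open>\<open>F = I f\<close> holds only for \<open>I \<ge> 0\<close>, so the derivative is identified from the right.\<close>
  have lim_quotient: "((\<lambda>h. (F (S, 0 + h) - F (S, 0)) / h) \<longlongrightarrow> F' (0, 1)) (at_right 0)"
    using has_derivative_Pair_partials(3)[OF F'] unfolding DERIV_def
    by (rule filterlim_mono) (simp_all add: at_le)
  have "((\<lambda>h. f (S, h)) \<longlongrightarrow> f (S, 0)) (at_right 0)"
    by (rule isCont_tendsto_compose[OF cont]) (intro tendsto_intros)
  moreover have "eventually (\<lambda>h. f (S, h) = (F (S, 0 + h) - F (S, 0)) / h) (at_right 0)"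
    using eventually_at_right_less[of "0::real"]
  proof eventually_elim
    case (elim h)
    then show ?case using \<open>S > 0\<close> incidence_eq_mult[OF H, of S h] incidence_I_zero[OF H, of S] by simp
  qed
  ultimately have "((\<lambda>h. (F (S, 0 + h) - F (S, 0)) / h) \<longlongrightarrow> f (S, 0)) (at_right 0)"
    by (simp add: tendsto_cong)
  with lim_quotient have "F' (0, 1) = f (S, 0)"
    by (rule tendsto_unique[OF trivial_limit_at_right_real])
  then show "pdI F S 0 = f (S, 0)"
    using has_derivative_Pair_partials(3)[OF F'] by (simp add: pdI_def DERIV_imp_deriv)
qed

section \<open>Existence of solutions in the nonnegative orthant\<close>

lemma lipschitz_on_state_components:
  shows "1-lipschitz_on A (\<lambda>q::state. fst q)"
    and "1-lipschitz_on A (\<lambda>q::state. fst (snd q))"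
    and "1-lipschitz_on A (\<lambda>q::state. fst (snd (snd q)))"
    and "1-lipschitz_on A (\<lambda>q::state. snd (snd (snd q)))"
  using abs_diff_le_dist_state by (auto intro!: lipschitz_onI simp: dist_real_def)

lemma lipschitz_on_mult_bounded:
  fixes f g :: "'a::metric_space \<Rightarrow> real"
  assumes "Lf-lipschitz_on A f" "Lg-lipschitz_on A g"
    and "\<And>x. x \<in> A \<Longrightarrow> \<bar>f x\<bar> \<le> B" "\<And>x. x \<in> A \<Longrightarrow> \<bar>g x\<bar> \<le> B" "B \<ge> 0"
  shows "(B * (Lf + Lg))-lipschitz_on A (\<lambda>x. f x * g x)"
proof (rule lipschitz_onI)
  fix x y assume "x \<in> A" "y \<in> A"
  have "f x * g x - f y * g y = f x * (g x - g y) + g y * (f x - f y)" by (simp add: algebra_simps)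
  then have "\<bar>f x * g x - f y * g y\<bar> \<le> \<bar>f x\<bar> * \<bar>g x - g y\<bar> + \<bar>g y\<bar> * \<bar>f x - f y\<bar>"
    by (metis abs_mult abs_triangle_ineq)
  also have "\<dots> \<le> B * (Lg * dist x y) + B * (Lf * dist x y)"
    using assms(3-5) \<open>x \<in> A\<close> \<open>y \<in> A\<close>
      lipschitz_onD[OF assms(1) \<open>x \<in> A\<close> \<open>y \<in> A\<close>] lipschitz_onD[OF assms(2) \<open>x \<in> A\<close> \<open>y \<in> A\<close>]
    by (intro add_mono mult_mono) (auto simp: dist_real_def)
  finally show "dist (f x * g x) (f y * g y) \<le> B * (Lf + Lg) * dist x y"
    by (simp add: dist_real_def algebra_simps)
next
  show "0 \<le> B * (Lf + Lg)"
    using \<open>B \<ge> 0\<close> lipschitz_on_nonneg[OF assms(1)] lipschitz_on_nonneg[OF assms(2)] by simp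
qed

definition clamp :: "real \<Rightarrow> real \<Rightarrow> real" where
  "clamp M y = max 0 (min M y)"

lemma clamp_neg: "y < 0 \<Longrightarrow> M \<ge> 0 \<Longrightarrow> clamp M y = 0"
  by (simp add: clamp_def)

lemma clamp_nonneg: "M \<ge> 0 \<Longrightarrow> clamp M y \<ge> 0"
  and clamp_eq_bound: "M \<le> y \<Longrightarrow> M \<ge> 0 \<Longrightarrow> clamp M y = M"
  by (simp_all add: clamp_def)

text \<open>Clipping the state to the box \<open>[0, M]\<^sup>4\<close> makes the vector field globally Lipschitz and
  bounded.  If \<open>M\<close> exceeds both the initial total population and \<open>\<Lambda>/\<mu>\<close>, a clipped solution starting
  in the orthant never reaches the clipping region, so it solves the original system.\<close>

definition clamp_state :: "real \<Rightarrow> state \<Rightarrow> state" where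
  "clamp_state M = (\<lambda>(S, V, I1, I2). (clamp M S, clamp M V, clamp M I1, clamp M I2))"

definition box4 :: "real \<Rightarrow> state set" where
  "box4 M = {0..M} \<times> {0..M} \<times> {0..M} \<times> {0..M}"

lemma box4_subset_orthant4: "box4 M \<subseteq> orthant4"
  by (auto simp: box4_def orthant4_def)

lemma clamp_state_in_box4: "M \<ge> 0 \<Longrightarrow> clamp_state M q \<in> box4 M"
  by (cases q) (auto simp: clamp_state_def box4_def clamp_def)

lemma clamp_state_id: "q \<in> box4 M \<Longrightarrow> clamp_state M q = q"
  by (cases q) (auto simp: clamp_state_def box4_def clamp_def)

lemma clamp_state_coordinates:
  shows "fst (clamp_state M q) = clamp M (fst q)"
    and "fst (snd (clamp_state M q)) = clamp M (fst (snd q))"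
    and "fst (snd (snd (clamp_state M q))) = clamp M (fst (snd (snd q)))"
    and "snd (snd (snd (clamp_state M q))) = clamp M (snd (snd (snd q)))"
  by (cases q; simp add: clamp_state_def)+

lemma clamp_state_lipschitz: "1-lipschitz_on UNIV (clamp_state M)"
proof (rule lipschitz_onI)
  have clamp: "dist (clamp M a) (clamp M b) \<le> dist a b" for a b
    by (auto simp: clamp_def dist_real_def)
  fix p q :: state
  show "dist (clamp_state M p) (clamp_state M q) \<le> 1 * dist p q"
    by (cases p, cases q) (simp add: clamp_state_def dist_Pair_Pair real_sqrt_le_mono add_mono
        power_mono clamp)
qed simp

definition population :: "state \<Rightarrow> real" where
  "population = (\<lambda>(S, V, I1, I2). S + V + I1 + I2)"

lemma bounded_linear_population: "bounded_linear population"
proof -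
  have eq: "population = (\<lambda>q. fst q + fst (snd q) + fst (snd (snd q)) + snd (snd (snd q)))"
    by (auto simp: population_def)
  show ?thesis unfolding eq by (intro bounded_linear_add bounded_linear_state_coordinates)
qed

lemma population_clamp_state_gt:
  assumes "q \<in> orthant4" "population q > M'" "0 \<le> M'" "M' < M"
  shows "population (clamp_state M q) > M'"
proof (cases "q \<in> box4 M")
  case True
  then show ?thesis using assms by (simp add: clamp_state_id)
next
  case False
  obtain S V I J where q: "q = (S, V, I, J)" by (cases q)
  with False assms(1) have "M < S \<or> M < V \<or> M < I \<or> M < J"
    by (auto simp: box4_def orthant4_def)
  moreover have "clamp M S \<ge> 0" "clamp M V \<ge> 0" "clamp M I \<ge> 0" "clamp M J \<ge> 0"
    using assms by (simp_all add: clamp_nonneg)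
  ultimately show ?thesis
    using assms clamp_eq_bound[of M] by (auto simp: q population_def clamp_state_def)
qed

locale two_strain_model =
  fixes F1 f1 F2 f2 :: "real \<times> real \<Rightarrow> real"
    and Lam mu r k gamma1 gamma2 v1 v2 :: real
  assumes pos: "Lam > 0" "mu > 0" "r > 0" "k > 0" "gamma1 > 0" "gamma2 > 0"
    and nonneg: "v1 \<ge> 0" "v2 \<ge> 0"
    and H1: "incidence_hyp F1 f1" and H2: "incidence_hyp F2 f2"
begin

abbreviation "G \<equiv> field F1 F2 Lam mu r k gamma1 gamma2 v1 v2"
abbreviation "lam \<equiv> r + mu"
abbreviation "a1 \<equiv> gamma1 + v1 + mu"
abbreviation "a2 \<equiv> gamma2 + v2 + mu"

lemma field_eq:
  "G (S, V, I, J) = (Lam - F1 (S, I) - F2 (S, J) - lam * S, r * S - (mu + k * J) * V,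
     F1 (S, I) - a1 * I, F2 (S, J) + k * J * V - a2 * J)"
  by (simp add: field_def Let_def)

lemma field_components:
  "G q = (Lam - F1 (fst q, fst (snd (snd q))) - F2 (fst q, snd (snd (snd q))) - lam * fst q,
     r * fst q - mu * fst (snd q) - k * (snd (snd (snd q)) * fst (snd q)),
     F1 (fst q, fst (snd (snd q))) - a1 * fst (snd (snd q)),
     F2 (fst q, snd (snd (snd q))) + k * (snd (snd (snd q)) * fst (snd q)) - a2 * snd (snd (snd q)))"
  by (cases q) (simp add: field_eq algebra_simps)

lemma field_quasi_positive:
  assumes "p \<in> orthant4"
  shows "fst p = 0 \<Longrightarrow> fst (G p) \<ge> 0"
    and "fst (snd p) = 0 \<Longrightarrow> fst (snd (G p)) \<ge> 0"
    and "fst (snd (snd p)) = 0 \<Longrightarrow> fst (snd (snd (G p))) \<ge> 0"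
    and "snd (snd (snd p)) = 0 \<Longrightarrow> snd (snd (snd (G p))) \<ge> 0"
  using assms pos incidence_S_zero[OF H1] incidence_S_zero[OF H2]
    incidence_I_zero[OF H1] incidence_I_zero[OF H2]
  by (cases p; auto simp: field_eq orthant4_def)+

lemma field_population_rate:
  assumes "p \<in> orthant4"
  shows "population (G p) \<le> Lam - mu * population p"
proof -
  obtain S V I J where p: "p = (S, V, I, J)" by (cases p)
  have "population (G p) = Lam - mu * (S + V) - a1 * I - a2 * J"
    by (simp add: p population_def field_eq algebra_simps)
  moreover have "mu * I \<le> a1 * I" "mu * J \<le> a2 * J"
    using assms pos nonneg by (auto simp: p orthant4_def intro!: mult_right_mono)
  ultimately show ?thesis by (simp add: p population_def algebra_simps)
qed

lemma field_lipschitz_on_box4: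
  assumes "M \<ge> 0"
  obtains C where "C-lipschitz_on (box4 M) G"
proof -
  have box2: "compact ({0..M} \<times> {0..M})" "convex ({0..M} \<times> {0..M})" "{0..M} \<times> {0..M} \<subseteq> quadrant"
    by (auto intro: compact_Times convex_Times simp: quadrant_def)
  obtain C1 where C1: "C1-lipschitz_on ({0..M} \<times> {0..M}) F1"
    using C2_on_lipschitz_on_compact_convex[OF _ box2] H1 unfolding incidence_hyp_def by blast
  obtain C2 where C2: "C2-lipschitz_on ({0..M} \<times> {0..M}) F2"
    using C2_on_lipschitz_on_compact_convex[OF _ box2] H2 unfolding incidence_hyp_def by blast
  note proj = lipschitz_on_state_components[of "box4 M"]
  have "(\<lambda>q. (fst q, fst (snd (snd q)))) ` box4 M \<subseteq> {0..M} \<times> {0..M}"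
    "(\<lambda>q. (fst q, snd (snd (snd q)))) ` box4 M \<subseteq> {0..M} \<times> {0..M}"
    by (auto simp: box4_def)
  then obtain L1 L2 where
      F1_lip: "L1-lipschitz_on (box4 M) (\<lambda>q. F1 (fst q, fst (snd (snd q))))" and
      F2_lip: "L2-lipschitz_on (box4 M) (\<lambda>q. F2 (fst q, snd (snd (snd q))))"
    using lipschitz_on_compose2[OF lipschitz_on_Pair[OF proj(1,3)] lipschitz_on_subset[OF C1]]
      lipschitz_on_compose2[OF lipschitz_on_Pair[OF proj(1,4)] lipschitz_on_subset[OF C2]]
    by blast
  have mult: "(M * (1 + 1))-lipschitz_on (box4 M) (\<lambda>q. snd (snd (snd q)) * fst (snd q))"
    using \<open>M \<ge> 0\<close> by (intro lipschitz_on_mult_bounded proj) (auto simp: box4_def)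
  have "\<exists>C. C-lipschitz_on (box4 M) G"
    unfolding field_components[abs_def]
    by (rule exI, (rule lipschitz_on_Pair lipschitz_on_diff lipschitz_on_add lipschitz_on_constant
          lipschitz_on_cmult_real F1_lip F2_lip proj mult)+)
  then show ?thesis using that by blast
qed


lemma clipped_field_global_solution:
  assumes "M \<ge> 0"
  obtains x where "x 0 = x0"
    "\<And>t. t \<ge> 0 \<Longrightarrow> (x has_vector_derivative G (clamp_state M (x t))) (at t within {0..})"
proof -
  obtain C where C: "C-lipschitz_on (box4 M) G" using field_lipschitz_on_box4[OF assms] .
  have "(C * 1)-lipschitz_on UNIV (\<lambda>q. G (clamp_state M q))"
    using clamp_state_in_box4[OF assms]
    by (intro lipschitz_on_compose2[OF clamp_state_lipschitz lipschitz_on_subset[OF C]]) auto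
  moreover have "compact (G ` box4 M)"
    unfolding box4_def
    by (intro compact_continuous_image lipschitz_on_continuous_on[OF C[unfolded box4_def]]
        compact_Times compact_Icc)
  then obtain B where "\<And>y. y \<in> G ` box4 M \<Longrightarrow> norm y \<le> B"
    using compact_imp_bounded bounded_iff by metis
  then have "norm (G (clamp_state M q)) \<le> B" for q using clamp_state_in_box4[OF assms] by blast
  ultimately show ?thesis
    using global_solution_if_lipschitz_bounded that by blast
qed

lemma clipped_solution_coordinate_nonneg:
  assumes sol: "\<And>t. t \<ge> 0 \<Longrightarrow> (x has_vector_derivative G (clamp_state M (x t))) (at t within {0..})"
    and "M \<ge> 0" and \<pi>: "bounded_linear \<pi>" "\<And>q. \<pi> (clamp_state M q) = clamp M (\<pi> q)"
    and quasi_pos: "\<And>p. p \<in> orthant4 \<Longrightarrow> \<pi> p = 0 \<Longrightarrow> \<pi> (G p) \<ge> 0"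
    and "\<pi> (x 0) \<ge> 0" "t \<ge> 0"
  shows "\<pi> (x t) \<ge> 0"
proof (rule nonneg_if_deriv_nonneg_where_neg[where \<phi> = "\<lambda>t. \<pi> (x t)"])
  show "continuous_on {0..} (\<lambda>t. \<pi> (x t))"
    using continuous_on_half_line_if_has_vector_derivative[OF sol]
    by (rule continuous_on_compose2[OF linear_continuous_on[OF \<pi>(1)]]) auto
  fix s :: real assume "s > 0" "\<pi> (x s) < 0"
  have deriv: "((\<lambda>t. \<pi> (x t)) has_real_derivative \<pi> (G (clamp_state M (x s)))) (at s)"
    using bounded_linear.has_vector_derivative[OF \<pi>(1)
        has_vector_derivative_at_if_half_line[OF sol \<open>s > 0\<close>]]
    by (simp add: has_real_derivative_iff_has_vector_derivative)
  have "clamp_state M (x s) \<in> orthant4"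
    using clamp_state_in_box4[OF \<open>M \<ge> 0\<close>] box4_subset_orthant4 by blast
  moreover have "\<pi> (clamp_state M (x s)) = 0"
    using \<pi>(2) clamp_neg[OF \<open>\<pi> (x s) < 0\<close> \<open>M \<ge> 0\<close>] by simp
  ultimately have "\<pi> (G (clamp_state M (x s))) \<ge> 0" by (rule quasi_pos)
  with deriv show "\<exists>y. ((\<lambda>t. \<pi> (x t)) has_real_derivative y) (at s) \<and> y \<ge> 0" by blast
qed (fact assms)+

lemma clipped_solution_in_orthant4:
  assumes sol: "\<And>t. t \<ge> 0 \<Longrightarrow> (x has_vector_derivative G (clamp_state M (x t))) (at t within {0..})"
    and "M \<ge> 0" "x 0 \<in> orthant4" "t \<ge> 0"
  shows "x t \<in> orthant4"
proof -
  have x0: "fst (x 0) \<ge> 0" "fst (snd (x 0)) \<ge> 0" "fst (snd (snd (x 0))) \<ge> 0" "snd (snd (snd (x 0))) \<ge> 0"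
    using \<open>x 0 \<in> orthant4\<close> by (auto simp: orthant4_def split: prod.splits)
  note lin = bounded_linear_state_coordinates
  have "fst (x t) \<ge> 0"
    by (rule clipped_solution_coordinate_nonneg[OF sol assms(2) lin(1) clamp_state_coordinates(1)
        field_quasi_positive(1) x0(1) assms(4)])
  moreover have "fst (snd (x t)) \<ge> 0"
    by (rule clipped_solution_coordinate_nonneg[OF sol assms(2) lin(2) clamp_state_coordinates(2)
        field_quasi_positive(2) x0(2) assms(4)])
  moreover have "fst (snd (snd (x t))) \<ge> 0"
    by (rule clipped_solution_coordinate_nonneg[OF sol assms(2) lin(3) clamp_state_coordinates(3)
        field_quasi_positive(3) x0(3) assms(4)])
  moreover have "snd (snd (snd (x t))) \<ge> 0"
    by (rule clipped_solution_coordinate_nonneg[OF sol assms(2) lin(4) clamp_state_coordinates(4)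
        field_quasi_positive(4) x0(4) assms(4)])
  ultimately show ?thesis by (cases "x t") (simp add: orthant4_def)
qed

lemma clipped_solution_population_le:
  assumes sol: "\<And>t. t \<ge> 0 \<Longrightarrow> (x has_vector_derivative G (clamp_state M (x t))) (at t within {0..})"
    and "x 0 \<in> orthant4" "population (x 0) \<le> M'" "Lam \<le> mu * M'" "0 \<le> M'" "M' < M" "t \<ge> 0"
  shows "population (x t) \<le> M'"
proof -
  have "M \<ge> 0" using assms by linarith
  have "M' - population (x t) \<ge> 0"
  proof (rule nonneg_if_deriv_nonneg_where_neg[where \<phi> = "\<lambda>t. M' - population (x t)"])
    show "continuous_on {0..} (\<lambda>t. M' - population (x t))"
      using continuous_on_half_line_if_has_vector_derivative[OF sol]
      by (intro continuous_intros
          continuous_on_compose2[OF linear_continuous_on[OF bounded_linear_population]]) auto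
    fix s :: real assume "s > 0" and "M' - population (x s) < 0"
    let ?c = "clamp_state M (x s)"
    have deriv: "((\<lambda>t. M' - population (x t)) has_real_derivative - population (G ?c)) (at s)"
      using bounded_linear.has_vector_derivative[OF bounded_linear_population
          has_vector_derivative_at_if_half_line[OF sol \<open>s > 0\<close>]]
      by (auto intro!: derivative_eq_intros simp: has_real_derivative_iff_has_vector_derivative)
    have "x s \<in> orthant4"
      using clipped_solution_in_orthant4[OF sol \<open>M \<ge> 0\<close> \<open>x 0 \<in> orthant4\<close>] \<open>s > 0\<close> by simp
    then have "population ?c > M'"
      using population_clamp_state_gt assms \<open>M' - population (x s) < 0\<close> by simp
    moreover have "?c \<in> orthant4"
      using clamp_state_in_box4[OF \<open>M \<ge> 0\<close>] box4_subset_orthant4 by blast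
    then have "population (G ?c) \<le> Lam - mu * population ?c" by (rule field_population_rate)
    ultimately have "- population (G ?c) \<ge> 0"
      using \<open>Lam \<le> mu * M'\<close> mult_strict_left_mono[of M' "population ?c" mu] pos(2) by linarith
    with deriv show "\<exists>y. ((\<lambda>t. M' - population (x t)) has_real_derivative y) (at s) \<and> y \<ge> 0"
      by blast
  qed (use assms in auto)
  then show ?thesis by simp
qed

lemma solution_exists:
  assumes "x0 \<in> orthant4"
  obtains x where "is_solution G orthant4 x" "x 0 = x0"
proof -
  define M' where "M' = max (population x0) (Lam / mu)"
  have M': "population x0 \<le> M'" "Lam \<le> mu * M'" "0 \<le> M'"
    using pos assms by (auto simp: M'_def field_simps max_def orthant4_def population_def)
  obtain x where "x 0 = x0" and
      sol: "\<And>t. t \<ge> 0 \<Longrightarrow> (x has_vector_derivative G (clamp_state (M' + 1) (x t))) (at t within {0..})"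
    using clipped_field_global_solution[of "M' + 1" x0] \<open>0 \<le> M'\<close> by auto
  have "x t \<in> orthant4 \<and> clamp_state (M' + 1) (x t) = x t" if "t \<ge> 0" for t
  proof
    show "x t \<in> orthant4"
      using clipped_solution_in_orthant4[OF sol _ _ that] assms M' \<open>x 0 = x0\<close> by simp
    moreover have "population (x t) \<le> M'"
      using clipped_solution_population_le[OF sol _ _ _ _ _ that] assms M' \<open>x 0 = x0\<close> by simp
    ultimately show "clamp_state (M' + 1) (x t) = x t"
      by (intro clamp_state_id) (cases "x t", auto simp: orthant4_def population_def box4_def)
  qed
  with sol have "is_solution G orthant4 x" by (simp add: is_solution_def)
  with \<open>x 0 = x0\<close> that show ?thesis by blast
qed

end

section \<open>The single-strain equilibrium \<open>E\<^sub>1\<close> and its instability\<close>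

locale E1_equilibrium = two_strain_model +
  fixes Sb Vb Ib :: real
  assumes E_pos: "Sb > 0" "Vb > 0" "Ib > 0"
    and E_eq: "G (Sb, Vb, Ib, 0) = (0, 0, 0, 0)"
begin

abbreviation "E\<^sub>1 \<equiv> (Sb, Vb, Ib, 0) :: state"

lemma E1_equations: "Lam = lam * Sb + a1 * Ib" "r * Sb = mu * Vb" "F1 (Sb, Ib) = a1 * Ib"
  using E_eq incidence_I_zero[OF H2, of Sb] E_pos by (simp_all add: field_eq algebra_simps)

lemma pdI_F2_E1: "pdI F2 Sb 0 = f2 (Sb, 0)"
  using incidence_pdI_at_zero(1)[OF H2 E_pos(1)] .

lemma I2_rate_near_E1:
  assumes "f2 (Sb, 0) + k * Vb > a2"
  obtains \<epsilon> m where "\<epsilon> > 0" "m > 0"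
    "\<And>S V I J. dist (S, V, I, J) E\<^sub>1 < \<epsilon> \<Longrightarrow> f2 (S, J) + k * V - a2 \<ge> m"
proof -
  define m where "m = (f2 (Sb, 0) + k * Vb - a2) / 2"
  have "m > 0" using assms by (simp add: m_def)
  obtain \<rho> where "\<rho> > 0" and \<rho>: "\<And>q. dist q (Sb, 0) < \<rho> \<Longrightarrow> dist (f2 q) (f2 (Sb, 0)) < m / 2"
    using incidence_pdI_at_zero(2)[OF H2 E_pos(1)] \<open>m > 0\<close>
    unfolding continuous_at_eps_delta by (metis half_gt_zero)
  define \<epsilon> where "\<epsilon> = min \<rho> (m / (2 * k))"
  have "f2 (S, J) + k * V - a2 \<ge> m" if "dist (S, V, I, J) E\<^sub>1 < \<epsilon>" for S V I J
  proof -
    have "dist (f2 (S, J)) (f2 (Sb, 0)) < m / 2"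
      using \<rho> dist_S_I2_le_dist_state[of "(S, V, I, J)" E\<^sub>1] that by (simp add: \<epsilon>_def)
    then have "f2 (S, J) > f2 (Sb, 0) - m / 2" unfolding dist_real_def by linarith
    moreover have "\<bar>V - Vb\<bar> < m / (2 * k)"
      using abs_diff_le_dist_state(2)[of "(S, V, I, J)" E\<^sub>1] that by (simp add: \<epsilon>_def)
    then have "k * (Vb - V) < m / 2"
      using pos(4) by (simp add: field_simps abs_less_iff)
    moreover have "2 * m = f2 (Sb, 0) + k * Vb - a2" by (simp add: m_def)
    ultimately show ?thesis by (simp add: algebra_simps)
  qed
  with \<open>m > 0\<close> \<open>\<rho> > 0\<close> pos(4) show ?thesis by (intro that[of \<epsilon> m]) (auto simp: \<epsilon>_def)
qed

lemma I2_has_real_derivative: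
  assumes "is_solution G orthant4 x" "t > 0" "x t = (S, V, I, J)"
  shows "((\<lambda>t. snd (snd (snd (x t)))) has_real_derivative J * (f2 (S, J) + k * V - a2)) (at t)"
proof -
  have "J \<ge> 0" "S \<ge> 0"
    using is_solution_in_domain[OF assms(1), of t] assms by (auto simp: orthant4_def)
  then have "snd (snd (snd (G (x t)))) = J * (f2 (S, J) + k * V - a2)"
    using incidence_eq_mult[OF H2] assms(3) by (simp add: field_eq algebra_simps)
  with has_vector_derivative_state_components(4)[OF is_solution_has_vector_derivative[OF assms(1,2)]]
  show ?thesis by simp
qed

lemma I2_grows_near_E1:
  assumes x: "is_solution G orthant4 x"
    and rate: "\<And>S V I J. dist (S, V, I, J) E\<^sub>1 < \<epsilon> \<Longrightarrow> f2 (S, J) + k * V - a2 \<ge> m"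
    and near: "\<And>t. t \<ge> 0 \<Longrightarrow> dist (x t) E\<^sub>1 < \<epsilon>" and "T \<ge> 0"
  shows "snd (snd (snd (x 0))) * exp (m * T) \<le> snd (snd (snd (x T)))"
proof -
  define J where "J t = snd (snd (snd (x t)))" for t
  have "- J T \<le> - J 0 * exp (- (- m) * T)"
  proof (rule exp_bound_if_deriv_le_linear[OF _ _ \<open>T \<ge> 0\<close>])
    show "continuous_on {0..T} (\<lambda>t. - J t)"
      unfolding J_def using is_solution_continuous[OF x]
      by (auto intro!: continuous_intros intro: continuous_on_subset)
    fix t assume "0 < t" "t < T"
    obtain S V I J' where xt: "x t = (S, V, I, J')" by (cases "x t")
    have "J' \<ge> 0" using is_solution_in_domain[OF x, of t] \<open>0 < t\<close> by (simp add: xt orthant4_def)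
    moreover have "f2 (S, J') + k * V - a2 \<ge> m" using rate near[of t] \<open>0 < t\<close> xt by simp
    ultimately have "J' * m \<le> J' * (f2 (S, J') + k * V - a2)" by (rule mult_left_mono[rotated])
    then have "- (J' * (f2 (S, J') + k * V - a2)) \<le> - (- m) * - J t"
      using xt by (simp add: J_def mult.commute)
    with I2_has_real_derivative[OF x \<open>0 < t\<close> xt]
    show "\<exists>y. ((\<lambda>t. - J t) has_real_derivative y) (at t) \<and> y \<le> - (- m) * - J t"
      unfolding J_def by (auto intro!: derivative_eq_intros)
  qed
  then show ?thesis by (simp add: J_def)
qed

lemma unstable_E1:
  assumes "f2 (Sb, 0) + k * Vb > a2"
  shows "unstable G orthant4 E\<^sub>1"
  unfolding unstable_def lyap_stable_def
proof
  obtain \<epsilon> m where "\<epsilon> > 0" "m > 0"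
    and rate: "\<And>S V I J. dist (S, V, I, J) E\<^sub>1 < \<epsilon> \<Longrightarrow> f2 (S, J) + k * V - a2 \<ge> m"
    using I2_rate_near_E1[OF assms] by blast
  assume "\<forall>\<epsilon>>0. \<exists>\<delta>>0. \<forall>x. is_solution G orthant4 x \<and> dist (x 0) E\<^sub>1 < \<delta> \<longrightarrow> (\<forall>t\<ge>0. dist (x t) E\<^sub>1 < \<epsilon>)"
  then obtain \<delta> where "\<delta> > 0" and
    stays: "\<And>x t. is_solution G orthant4 x \<Longrightarrow> dist (x 0) E\<^sub>1 < \<delta> \<Longrightarrow> t \<ge> 0 \<Longrightarrow> dist (x t) E\<^sub>1 < \<epsilon>"
    using \<open>\<epsilon> > 0\<close> by blast
  obtain x where x: "is_solution G orthant4 x" "x 0 = (Sb, Vb, Ib, \<delta> / 2)"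
    using solution_exists[of "(Sb, Vb, Ib, \<delta> / 2)"] E_pos \<open>\<delta> > 0\<close> by (auto simp: orthant4_def)
  have "dist (x 0) E\<^sub>1 < \<delta>" using x(2) \<open>\<delta> > 0\<close> by (simp add: dist_Pair_Pair)
  note near = stays[OF x(1) this]
  define T where "T = 2 * \<epsilon> / (\<delta> * m)"
  have "T \<ge> 0" using \<open>\<epsilon> > 0\<close> \<open>\<delta> > 0\<close> \<open>m > 0\<close> by (simp add: T_def)
  have "\<delta> / 2 + \<epsilon> = \<delta> / 2 * (1 + m * T)"
    using \<open>\<delta> > 0\<close> \<open>m > 0\<close> by (simp add: T_def field_simps)
  also have "\<dots> \<le> \<delta> / 2 * exp (m * T)"
    using \<open>\<delta> > 0\<close> exp_ge_add_one_self[of "m * T"] by (intro mult_left_mono) auto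
  also have "\<dots> \<le> snd (snd (snd (x T)))"
    using I2_grows_near_E1[OF x(1) rate near \<open>T \<ge> 0\<close>] x(2) by simp
  also have "\<dots> \<le> dist (x T) E\<^sub>1"
    using abs_diff_le_dist_state(4)[of "x T" E\<^sub>1] by simp
  finally show False using near[OF \<open>T \<ge> 0\<close>] \<open>\<delta> > 0\<close> by simp
qed

end

section \<open>A quadratic Lyapunov form for 2 \<times> 2 matrices\<close>

text \<open>For \<open>A = [[a, b], [c, d]]\<close> and \<open>X = (s, w)\<close>, \<open>lyap2 a b c d s w = |A X|\<^sup>2 + det A \<cdot> |X|\<^sup>2\<close>.
  By Cayley-Hamilton, \<open>A\<^sup>2 = tr A \<cdot> A - det A \<cdot> 1\<close>, so its derivative along \<open>X' = A X\<close> is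
  \<open>2 tr A \<cdot> |A X|\<^sup>2\<close>: a strict Lyapunov function whenever \<open>tr A < 0 < det A\<close>.\<close>

definition lyap2 :: "real \<Rightarrow> real \<Rightarrow> real \<Rightarrow> real \<Rightarrow> real \<Rightarrow> real \<Rightarrow> real" where
  "lyap2 a b c d s w = (a * s + b * w)\<^sup>2 + (c * s + d * w)\<^sup>2 + (a * d - b * c) * (s\<^sup>2 + w\<^sup>2)"

definition lyap2_ds :: "real \<Rightarrow> real \<Rightarrow> real \<Rightarrow> real \<Rightarrow> real \<Rightarrow> real \<Rightarrow> real" where
  "lyap2_ds a b c d s w = 2 * (a * s + b * w) * a + 2 * (c * s + d * w) * c + 2 * (a * d - b * c) * s"

definition lyap2_dw :: "real \<Rightarrow> real \<Rightarrow> real \<Rightarrow> real \<Rightarrow> real \<Rightarrow> real \<Rightarrow> real" where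
  "lyap2_dw a b c d s w = 2 * (a * s + b * w) * b + 2 * (c * s + d * w) * d + 2 * (a * d - b * c) * w"

lemma lyap2_has_real_derivative:
  assumes "(s has_real_derivative s') (at t)" "(w has_real_derivative w') (at t)"
  shows "((\<lambda>t. lyap2 a b c d (s t) (w t)) has_real_derivative
      lyap2_ds a b c d (s t) (w t) * s' + lyap2_dw a b c d (s t) (w t) * w') (at t)"
proof -
  have sq: "((\<lambda>t. (f t)\<^sup>2) has_real_derivative 2 * f t * f') (at t)"
    if "(f has_real_derivative f') (at t)" for f f'
    using DERIV_mult[OF that that] by (simp add: power2_eq_square algebra_simps)
  have lin: "((\<lambda>t. x * s t + y * w t) has_real_derivative x * s' + y * w') (at t)" for x y
    by (intro DERIV_add DERIV_cmult assms)
  have "((\<lambda>t. lyap2 a b c d (s t) (w t)) has_real_derivative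
      2 * (a * s t + b * w t) * (a * s' + b * w') + 2 * (c * s t + d * w t) * (c * s' + d * w')
      + (a * d - b * c) * (2 * s t * s' + 2 * w t * w')) (at t)"
    unfolding lyap2_def by (intro DERIV_add DERIV_cmult sq lin assms)
  then show ?thesis
    by (rule DERIV_cong) (simp add: lyap2_ds_def lyap2_dw_def algebra_simps)
qed

lemma lyap2_orbital_derivative_linear:
  "lyap2_ds a b c d s w * (a * s + b * w) + lyap2_dw a b c d s w * (c * s + d * w)
     = 2 * (a + d) * ((a * s + b * w)\<^sup>2 + (c * s + d * w)\<^sup>2)"
  unfolding lyap2_ds_def lyap2_dw_def by (simp add: power2_eq_square algebra_simps)

lemma Cauchy_Schwarz_ineq_real_pair: "(x * u + y * v)\<^sup>2 \<le> (x\<^sup>2 + y\<^sup>2) * (u\<^sup>2 + v\<^sup>2)" for x y u v :: real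
  using Cauchy_Schwarz_ineq[of "(x, y)" "(u, v)"] by (simp add: power2_eq_square)

lemma lyap2_image_coercive:
  fixes a b c d s w :: real
  shows "(a * d - b * c)\<^sup>2 * (s\<^sup>2 + w\<^sup>2)
    \<le> (a\<^sup>2 + b\<^sup>2 + c\<^sup>2 + d\<^sup>2) * ((a * s + b * w)\<^sup>2 + (c * s + d * w)\<^sup>2)"
proof -
  define y1 y2 D where "y1 = a * s + b * w" and "y2 = c * s + d * w" and "D = a * d - b * c"
  have "D * s = d * y1 + (- b) * y2" "D * w = (- c) * y1 + a * y2"
    by (simp_all add: y1_def y2_def D_def algebra_simps)
  then have "(D * s)\<^sup>2 \<le> (d\<^sup>2 + b\<^sup>2) * (y1\<^sup>2 + y2\<^sup>2)" "(D * w)\<^sup>2 \<le> (c\<^sup>2 + a\<^sup>2) * (y1\<^sup>2 + y2\<^sup>2)"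
    using Cauchy_Schwarz_ineq_real_pair[where x = d and y = "- b" and u = y1 and v = y2]
      Cauchy_Schwarz_ineq_real_pair[where x = "- c" and y = a and u = y1 and v = y2] by simp_all
  then have "D\<^sup>2 * (s\<^sup>2 + w\<^sup>2) \<le> (a\<^sup>2 + b\<^sup>2 + c\<^sup>2 + d\<^sup>2) * (y1\<^sup>2 + y2\<^sup>2)"
    by (simp add: power_mult_distrib algebra_simps)
  then show ?thesis by (simp add: y1_def y2_def D_def)
qed

lemma lyap2_le: "lyap2 a b c d s w \<le> (a\<^sup>2 + b\<^sup>2 + c\<^sup>2 + d\<^sup>2 + (a * d - b * c)) * (s\<^sup>2 + w\<^sup>2)"
  using Cauchy_Schwarz_ineq_real_pair[where x = a and y = b and u = s and v = w]
    Cauchy_Schwarz_ineq_real_pair[where x = c and y = d and u = s and v = w]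
  by (simp add: lyap2_def algebra_simps)

lemma lyap2_ge: "a * d - b * c \<ge> 0 \<Longrightarrow> (a * d - b * c) * (s\<^sup>2 + w\<^sup>2) \<le> lyap2 a b c d s w"
  by (simp add: lyap2_def)

lemma lyap2_gradient_bound:
  fixes a b c d s w :: real
  defines "C \<equiv> 2 * (\<bar>a\<bar> + \<bar>b\<bar> + \<bar>c\<bar> + \<bar>d\<bar>)\<^sup>2 + 2 * \<bar>a * d - b * c\<bar>"
  shows "\<bar>lyap2_ds a b c d s w\<bar> \<le> C * (\<bar>s\<bar> + \<bar>w\<bar>)" and "\<bar>lyap2_dw a b c d s w\<bar> \<le> C * (\<bar>s\<bar> + \<bar>w\<bar>)"
proof -
  define A \<sigma> where "A = \<bar>a\<bar> + \<bar>b\<bar> + \<bar>c\<bar> + \<bar>d\<bar>" and "\<sigma> = \<bar>s\<bar> + \<bar>w\<bar>"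
  have row: "\<bar>x * s + y * w\<bar> \<le> A * \<sigma>" if "\<bar>x\<bar> \<le> A" "\<bar>y\<bar> \<le> A" for x y
  proof -
    have "\<bar>x * s + y * w\<bar> \<le> \<bar>x\<bar> * \<bar>s\<bar> + \<bar>y\<bar> * \<bar>w\<bar>" by (metis abs_mult abs_triangle_ineq)
    also have "\<dots> \<le> A * \<bar>s\<bar> + A * \<bar>w\<bar>" using that by (intro add_mono mult_right_mono) auto
    finally show ?thesis by (simp add: \<sigma>_def algebra_simps)
  qed
  have rows: "\<bar>a * s + b * w\<bar> \<le> A * \<sigma>" "\<bar>c * s + d * w\<bar> \<le> A * \<sigma>"
    by (rule row; simp add: A_def)+
  have triangle: "\<bar>2 * P * x + 2 * Q * y + 2 * R * z\<bar> \<le> 2 * (\<bar>P\<bar> * \<bar>x\<bar> + \<bar>Q\<bar> * \<bar>y\<bar> + \<bar>R\<bar> * \<bar>z\<bar>)"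
    for P Q R x y z :: real
    using abs_triangle_ineq[of "2 * P * x" "2 * Q * y"]
      abs_triangle_ineq[of "2 * P * x + 2 * Q * y" "2 * R * z"]
    by (simp add: abs_mult)
  have grad: "\<bar>2 * (a * s + b * w) * x + 2 * (c * s + d * w) * y + 2 * (a * d - b * c) * z\<bar> \<le> C * \<sigma>"
    if "\<bar>x\<bar> + \<bar>y\<bar> \<le> A" "\<bar>z\<bar> \<le> \<sigma>" for x y z
  proof -
    have "\<bar>a * s + b * w\<bar> * \<bar>x\<bar> + \<bar>c * s + d * w\<bar> * \<bar>y\<bar> \<le> A * \<sigma> * \<bar>x\<bar> + A * \<sigma> * \<bar>y\<bar>"
      using rows by (intro add_mono mult_right_mono) auto
    also have "\<dots> = A * \<sigma> * (\<bar>x\<bar> + \<bar>y\<bar>)" by (simp add: algebra_simps)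
    also have "\<dots> \<le> A * \<sigma> * A"
      using that by (intro mult_left_mono) (auto simp: A_def \<sigma>_def)
    finally have "\<bar>a * s + b * w\<bar> * \<bar>x\<bar> + \<bar>c * s + d * w\<bar> * \<bar>y\<bar> \<le> A * \<sigma> * A" .
    moreover have "\<bar>a * d - b * c\<bar> * \<bar>z\<bar> \<le> \<bar>a * d - b * c\<bar> * \<sigma>"
      using that by (intro mult_left_mono) auto
    ultimately have "2 * (\<bar>a * s + b * w\<bar> * \<bar>x\<bar> + \<bar>c * s + d * w\<bar> * \<bar>y\<bar> + \<bar>a * d - b * c\<bar> * \<bar>z\<bar>)
        \<le> C * \<sigma>"
      by (simp add: C_def A_def power2_eq_square algebra_simps)
    with triangle show ?thesis by (rule order_trans)
  qed
  show "\<bar>lyap2_ds a b c d s w\<bar> \<le> C * (\<bar>s\<bar> + \<bar>w\<bar>)"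
    unfolding lyap2_ds_def \<sigma>_def[symmetric] by (rule grad) (simp_all add: A_def \<sigma>_def)
  show "\<bar>lyap2_dw a b c d s w\<bar> \<le> C * (\<bar>s\<bar> + \<bar>w\<bar>)"
    unfolding lyap2_dw_def \<sigma>_def[symmetric] by (rule grad) (simp_all add: A_def \<sigma>_def)
qed

lemma lyap2_orbital_derivative_le:
  fixes a b c d s w p1 p2 :: real
  assumes "a + d < 0"
  shows "lyap2_ds a b c d s w * (a * s + b * w + p1) + lyap2_dw a b c d s w * (c * s + d * w + p2)
    \<le> 2 * (a + d) * (a * d - b * c)\<^sup>2 / (a\<^sup>2 + b\<^sup>2 + c\<^sup>2 + d\<^sup>2) * (s\<^sup>2 + w\<^sup>2)
      + (2 * (\<bar>a\<bar> + \<bar>b\<bar> + \<bar>c\<bar> + \<bar>d\<bar>)\<^sup>2 + 2 * \<bar>a * d - b * c\<bar>) * (\<bar>s\<bar> + \<bar>w\<bar>) * (\<bar>p1\<bar> + \<bar>p2\<bar>)"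
proof -
  define Fr C where "Fr = a\<^sup>2 + b\<^sup>2 + c\<^sup>2 + d\<^sup>2"
    and "C = 2 * (\<bar>a\<bar> + \<bar>b\<bar> + \<bar>c\<bar> + \<bar>d\<bar>)\<^sup>2 + 2 * \<bar>a * d - b * c\<bar>"
  have "0 < a\<^sup>2 + d\<^sup>2" using assms by (auto simp: sum_power2_gt_zero_iff)
  then have "Fr > 0" unfolding Fr_def using zero_le_power2[of b] zero_le_power2[of c] by linarith
  have "2 * (a + d) * (a * d - b * c)\<^sup>2 / Fr * (s\<^sup>2 + w\<^sup>2)
      = 2 * (a + d) / Fr * ((a * d - b * c)\<^sup>2 * (s\<^sup>2 + w\<^sup>2))" by simp
  also have "\<dots> \<ge> 2 * (a + d) / Fr * (Fr * ((a * s + b * w)\<^sup>2 + (c * s + d * w)\<^sup>2))"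
    using lyap2_image_coercive[of a d b c s w] assms \<open>Fr > 0\<close>
    by (intro mult_left_mono_neg) (auto simp: Fr_def divide_nonpos_pos)
  finally have linear: "lyap2_ds a b c d s w * (a * s + b * w) + lyap2_dw a b c d s w * (c * s + d * w)
      \<le> 2 * (a + d) * (a * d - b * c)\<^sup>2 / Fr * (s\<^sup>2 + w\<^sup>2)"
    using \<open>Fr > 0\<close> by (simp add: lyap2_orbital_derivative_linear)
  have "lyap2_ds a b c d s w * p1 + lyap2_dw a b c d s w * p2
      \<le> \<bar>lyap2_ds a b c d s w\<bar> * \<bar>p1\<bar> + \<bar>lyap2_dw a b c d s w\<bar> * \<bar>p2\<bar>"
    by (intro add_mono) (metis abs_ge_self abs_mult)+
  also have "\<dots> \<le> C * (\<bar>s\<bar> + \<bar>w\<bar>) * \<bar>p1\<bar> + C * (\<bar>s\<bar> + \<bar>w\<bar>) * \<bar>p2\<bar>"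
    using lyap2_gradient_bound[of a b c d s w] by (intro add_mono mult_right_mono) (auto simp: C_def)
  finally have "lyap2_ds a b c d s w * p1 + lyap2_dw a b c d s w * p2 \<le> C * (\<bar>s\<bar> + \<bar>w\<bar>) * (\<bar>p1\<bar> + \<bar>p2\<bar>)"
    by (simp add: algebra_simps)
  with linear show ?thesis by (simp add: Fr_def C_def algebra_simps)
qed

section \<open>Stability of \<open>E\<^sub>1\<close> below threshold\<close>

locale E1_subthreshold = E1_equilibrium +
  assumes subthreshold: "f2 (Sb, 0) + k * Vb < a2"
begin

text \<open>In the coordinates \<open>s = (S - Sb) + (I1 - Ib)\<close>, \<open>w = I1 - Ib\<close> the \<open>(S, I1)\<close>-block of the
  linearisation at \<open>E\<^sub>1\<close> is \<open>[[-\<lambda>, \<lambda> - \<alpha>\<^sub>1], [c1, -h]]\<close>, where \<open>c1\<close> and \<open>b1\<close> are the partial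
  derivatives of \<open>F1\<close> at \<open>(Sb, Ib)\<close> and \<open>h = c1 + \<alpha>\<^sub>1 - b1\<close>; by (H2) its trace is negative and its
  determinant \<open>\<Delta>\<close> positive.  \<open>Q\<close> is the Lyapunov form of this block and decays at rate \<open>\<gamma>\<close>,
  \<open>I2\<close> decays at rate \<open>m\<close>, and \<open>\<beta>\<close> is chosen so small that the coupling \<open>r (S - Sb)\<close> in the
  \<open>V1\<close>-equation costs at most \<open>\<gamma>/2\<close>.\<close>

definition "c1 = pdS F1 Sb Ib"
definition "b1 = pdI F1 Sb Ib"
definition "h = c1 + a1 - b1"
definition "\<Delta> = lam * (a1 - b1) + a1 * c1"
definition "Fr = lam\<^sup>2 + (lam - a1)\<^sup>2 + c1\<^sup>2 + h\<^sup>2"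
definition "\<gamma> = (lam + h) * \<Delta>\<^sup>2 / Fr"
definition "C\<^sub>g = 2 * (\<bar>- lam\<bar> + \<bar>lam - a1\<bar> + \<bar>c1\<bar> + \<bar>- h\<bar>)\<^sup>2 + 2 * \<bar>\<Delta>\<bar>"
definition "\<beta> = \<gamma> * mu / (4 * r\<^sup>2)"
definition "m = a2 - f2 (Sb, 0) - k * Vb"

definition "Q = lyap2 (- lam) (lam - a1) c1 (- h)"
definition "Q\<^sub>s = lyap2_ds (- lam) (lam - a1) c1 (- h)"
definition "Q\<^sub>w = lyap2_dw (- lam) (lam - a1) c1 (- h)"

lemma F1_linearization:
  "(F1 has_derivative (\<lambda>(u, w). c1 * u + b1 * w)) (at (Sb, Ib))" "c1 > 0" "b1 \<le> a1"
proof -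
  have "f1 (Sb, Ib) = a1" using E1_equations(3) E_pos incidence_eq_mult[OF H1, of Sb Ib] by simp
  with incidence_linearization[OF H1 E_pos(1,3)]
  show "(F1 has_derivative (\<lambda>(u, w). c1 * u + b1 * w)) (at (Sb, Ib))" "c1 > 0" "b1 \<le> a1"
    by (simp_all add: c1_def b1_def)
qed

lemma constants_pos: "h > 0" "\<Delta> > 0" "Fr > 0" "\<gamma> > 0" "C\<^sub>g > 0" "\<beta> > 0" "m > 0"
proof -
  show "h > 0" "\<Delta> > 0" using F1_linearization(2,3) pos nonneg
    by (simp_all add: h_def \<Delta>_def add_nonneg_pos)
  moreover show "Fr > 0" using pos by (simp add: Fr_def add_pos_nonneg)
  ultimately show "\<gamma> > 0" using pos by (simp add: \<gamma>_def)
  then show "\<beta> > 0" using pos by (simp add: \<beta>_def)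
  show "C\<^sub>g > 0" using \<open>\<Delta> > 0\<close> by (simp add: C\<^sub>g_def add_nonneg_pos)
  show "m > 0" using subthreshold by (simp add: m_def)
qed

lemma det_eq: "- lam * - h - (lam - a1) * c1 = \<Delta>"
  by (simp add: h_def \<Delta>_def algebra_simps)

lemma Q_lower: "\<Delta> * (s\<^sup>2 + w\<^sup>2) \<le> Q s w"
  using lyap2_ge[of "- lam" "- h" "lam - a1" c1 s w] constants_pos(2)
  unfolding Q_def det_eq by simp

lemma Q_upper: "Q s w \<le> (Fr + \<Delta>) * (s\<^sup>2 + w\<^sup>2)"
  using lyap2_le[of "- lam" "lam - a1" c1 "- h" s w]
  unfolding Q_def det_eq power2_minus Fr_def[symmetric] .

lemma Q_orbital_derivative_le:
  "Q\<^sub>s s w * (- lam * s + (lam - a1) * w + p1) + Q\<^sub>w s w * (c1 * s + - h * w + p2)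
    \<le> - 2 * \<gamma> * (s\<^sup>2 + w\<^sup>2) + C\<^sub>g * (\<bar>s\<bar> + \<bar>w\<bar>) * (\<bar>p1\<bar> + \<bar>p2\<bar>)"
proof -
  have "- lam + - h < 0" using constants_pos(1) pos by simp
  from lyap2_orbital_derivative_le[OF this, of "lam - a1" c1 s w p1 p2]
  show ?thesis
    unfolding Q\<^sub>s_def Q\<^sub>w_def det_eq power2_minus Fr_def[symmetric] C\<^sub>g_def[symmetric]
    by (simp add: \<gamma>_def algebra_simps)
qed

definition "s_coord q = fst q - Sb + (fst (snd (snd q)) - Ib)"
definition "w_coord q = fst (snd (snd q)) - Ib"

definition W :: "state \<Rightarrow> real" where
  "W q = Q (s_coord q) (w_coord q) + \<beta> * (fst (snd q) - Vb)\<^sup>2 + snd (snd (snd q))"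

definition W' :: "state \<Rightarrow> real" where
  "W' q = Q\<^sub>s (s_coord q) (w_coord q) * (fst (G q) + fst (snd (snd (G q))))
     + Q\<^sub>w (s_coord q) (w_coord q) * fst (snd (snd (G q)))
     + 2 * \<beta> * (fst (snd q) - Vb) * fst (snd (G q)) + snd (snd (snd (G q)))"

lemma W_eq: "W (S, V, I, J) = Q (S - Sb + (I - Ib)) (I - Ib) + \<beta> * (V - Vb)\<^sup>2 + J"
  by (simp add: W_def s_coord_def w_coord_def)

lemma W_E1: "W E\<^sub>1 = 0"
  by (simp add: W_eq Q_def lyap2_def)

lemma W_nonneg:
  assumes "q \<in> orthant4"
  shows "W q \<ge> 0"
proof -
  obtain S V I J where q: "q = (S, V, I, J)" by (cases q)
  have "0 \<le> \<Delta> * ((S - Sb + (I - Ib))\<^sup>2 + (I - Ib)\<^sup>2)" using constants_pos(2) by simp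
  also have "\<dots> \<le> Q (S - Sb + (I - Ib)) (I - Ib)" by (rule Q_lower)
  finally show ?thesis using assms constants_pos(6) by (simp add: q W_eq orthant4_def)
qed

lemma W_continuous: "continuous_on UNIV W"
  unfolding W_def[abs_def] s_coord_def w_coord_def Q_def lyap2_def by (intro continuous_intros)

lemma W_has_real_derivative:
  assumes "is_solution G orthant4 x" "t > 0"
  shows "((\<lambda>t. W (x t)) has_real_derivative W' (x t)) (at t)"
proof -
  note d = has_vector_derivative_state_components[OF is_solution_has_vector_derivative[OF assms]]
  have "((\<lambda>t. s_coord (x t)) has_real_derivative fst (G (x t)) + fst (snd (snd (G (x t))))) (at t)"
    "((\<lambda>t. w_coord (x t)) has_real_derivative fst (snd (snd (G (x t))))) (at t)"
    unfolding s_coord_def w_coord_def by (auto intro!: derivative_eq_intros d)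
  from lyap2_has_real_derivative[OF this]
  show ?thesis unfolding W_def[abs_def] W'_def Q_def Q\<^sub>s_def Q\<^sub>w_def
    by (auto intro!: derivative_eq_intros d simp: algebra_simps)
qed

lemma W_sublevel_near:
  assumes "\<epsilon> > 0"
  obtains \<omega> where "\<omega> > 0" "\<And>q. q \<in> orthant4 \<Longrightarrow> W q \<le> \<omega> \<Longrightarrow> dist q E\<^sub>1 < \<epsilon>"
proof
  define \<rho> where "\<rho> = \<epsilon> / 4"
  have "\<rho> > 0" using assms by (simp add: \<rho>_def)
  define \<omega> where "\<omega> = min (\<Delta> * (\<rho>\<^sup>2 / 4)) (min (\<beta> * (\<rho>\<^sup>2 / 2)) (\<rho> / 2))"
  show "\<omega> > 0" using \<open>\<rho> > 0\<close> constants_pos by (simp add: \<omega>_def)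
  fix q assume "q \<in> orthant4" "W q \<le> \<omega>"
  obtain S V I J where q: "q = (S, V, I, J)" by (cases q)
  define s w where "s = S - Sb + (I - Ib)" and "w = I - Ib"
  have "J \<ge> 0" using \<open>q \<in> orthant4\<close> by (simp add: q orthant4_def)
  have "\<Delta> * (s\<^sup>2 + w\<^sup>2) + \<beta> * (V - Vb)\<^sup>2 + J \<le> \<omega>"
    using Q_lower[of s w] \<open>W q \<le> \<omega>\<close> by (simp add: q W_eq s_def w_def)
  moreover have "0 \<le> \<Delta> * (s\<^sup>2 + w\<^sup>2)" "0 \<le> \<beta> * (V - Vb)\<^sup>2" using constants_pos by simp_all
  ultimately have "\<Delta> * (s\<^sup>2 + w\<^sup>2) \<le> \<Delta> * (\<rho>\<^sup>2 / 4)" "\<beta> * (V - Vb)\<^sup>2 \<le> \<beta> * (\<rho>\<^sup>2 / 2)" "J \<le> \<rho> / 2"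
    using \<open>J \<ge> 0\<close> unfolding \<omega>_def by auto
  then have X: "s\<^sup>2 + w\<^sup>2 \<le> \<rho>\<^sup>2 / 4" and v: "(V - Vb)\<^sup>2 \<le> \<rho>\<^sup>2 / 2"
    using constants_pos by (auto dest: mult_left_le_imp_le)
  have abs_less: "\<bar>y\<bar> < \<rho>" if "y\<^sup>2 < \<rho>\<^sup>2" for y
    using power2_less_imp_less[of "\<bar>y\<bar>" \<rho>] that \<open>\<rho> > 0\<close> by simp
  have half: "\<rho>\<^sup>2 / 2 < \<rho>\<^sup>2" using \<open>\<rho> > 0\<close> by simp
  have "(S - Sb)\<^sup>2 \<le> 2 * (s\<^sup>2 + w\<^sup>2)"
    using zero_le_power2[of "s + w"] by (simp add: s_def w_def power2_eq_square algebra_simps)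
  also have "\<dots> \<le> \<rho>\<^sup>2 / 2" using X by simp
  finally have S_near: "(S - Sb)\<^sup>2 < \<rho>\<^sup>2" using half by (rule le_less_trans)
  have "w\<^sup>2 \<le> s\<^sup>2 + w\<^sup>2" by simp
  also have "\<dots> \<le> \<rho>\<^sup>2 / 4" by (rule X)
  also have "\<dots> < \<rho>\<^sup>2" using \<open>\<rho> > 0\<close> by simp
  finally have "w\<^sup>2 < \<rho>\<^sup>2" .
  moreover have "(V - Vb)\<^sup>2 < \<rho>\<^sup>2" using v half by (rule le_less_trans)
  ultimately have "\<bar>S - Sb\<bar> < \<rho>" "\<bar>I - Ib\<bar> < \<rho>" "\<bar>V - Vb\<bar> < \<rho>"
    using S_near by (simp_all add: abs_less flip: w_def)
  then have "dist q E\<^sub>1 < 4 * \<rho>"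
    using dist_state_le_sum_abs[of S V I J Sb Vb Ib 0] \<open>J \<le> \<rho> / 2\<close> \<open>J \<ge> 0\<close> \<open>\<rho> > 0\<close>
    by (simp add: q)
  then show "dist q E\<^sub>1 < \<epsilon>" by (simp add: \<rho>_def)
qed

definition "F1_rem S I = F1 (S, I) - F1 (Sb, Ib) - (c1 * (S - Sb) + b1 * (I - Ib))"

lemma F1_rem_small:
  assumes "\<eta> > 0"
  obtains \<rho> where "\<rho> > 0"
    "\<And>S I. \<bar>S - Sb\<bar> < \<rho> \<Longrightarrow> \<bar>I - Ib\<bar> < \<rho> \<Longrightarrow> \<bar>F1_rem S I\<bar> \<le> \<eta> * (\<bar>S - Sb\<bar> + \<bar>I - Ib\<bar>)"
proof -
  obtain d where "d > 0" and d: "\<forall>y. norm (y - (Sb, Ib)) < d \<longrightarrow>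
      norm (F1 y - F1 (Sb, Ib) - (\<lambda>(u, w). c1 * u + b1 * w) (y - (Sb, Ib))) \<le> \<eta> * norm (y - (Sb, Ib))"
    using F1_linearization(1) assms unfolding has_derivative_at_alt by blast
  show thesis
  proof (rule that)
    fix S I assume "\<bar>S - Sb\<bar> < d / 2" "\<bar>I - Ib\<bar> < d / 2"
    have n: "norm ((S, I) - (Sb, Ib)) \<le> \<bar>S - Sb\<bar> + \<bar>I - Ib\<bar>"
      using dist_Pair_le_sum_abs[of S I Sb Ib] by (simp add: dist_norm)
    with \<open>\<bar>S - Sb\<bar> < d / 2\<close> \<open>\<bar>I - Ib\<bar> < d / 2\<close> have "norm ((S, I) - (Sb, Ib)) < d" by linarith
    with d have "\<bar>F1_rem S I\<bar> \<le> \<eta> * norm ((S, I) - (Sb, Ib))" by (simp add: F1_rem_def)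
    also have "\<dots> \<le> \<eta> * (\<bar>S - Sb\<bar> + \<bar>I - Ib\<bar>)" using n assms by (intro mult_left_mono) auto
    finally show "\<bar>F1_rem S I\<bar> \<le> \<eta> * (\<bar>S - Sb\<bar> + \<bar>I - Ib\<bar>)" .
  qed (use \<open>d > 0\<close> in simp)
qed

lemma W'_eq:
  assumes "S \<ge> 0" "J \<ge> 0"
  shows "W' (S, V, I, J) =
      Q\<^sub>s (S - Sb + (I - Ib)) (I - Ib)
        * (- lam * (S - Sb + (I - Ib)) + (lam - a1) * (I - Ib) + - F2 (S, J))
    + Q\<^sub>w (S - Sb + (I - Ib)) (I - Ib) * (c1 * (S - Sb + (I - Ib)) + - h * (I - Ib) + F1_rem S I)
    + 2 * \<beta> * (V - Vb) * (r * (S - Sb) - mu * (V - Vb) - k * J * V)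
    + J * (f2 (S, J) + k * V - a2)"
proof -
  note E = E1_equations and G = field_eq[of S V I J]
  have "fst (G (S, V, I, J)) + fst (snd (snd (G (S, V, I, J))))
      = - lam * (S - Sb + (I - Ib)) + (lam - a1) * (I - Ib) + - F2 (S, J)"
    unfolding G by (simp add: E(1) algebra_simps)
  moreover have "fst (snd (snd (G (S, V, I, J))))
      = c1 * (S - Sb + (I - Ib)) + - h * (I - Ib) + F1_rem S I"
    unfolding G by (simp add: F1_rem_def h_def E(3) algebra_simps)
  moreover have "fst (snd (G (S, V, I, J))) = r * (S - Sb) - mu * (V - Vb) - k * J * V"
    unfolding G using E(2) by (simp add: algebra_simps)
  moreover have "snd (snd (snd (G (S, V, I, J)))) = J * (f2 (S, J) + k * V - a2)"
    unfolding G using incidence_eq_mult[OF H2 assms] by (simp add: algebra_simps)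
  ultimately show ?thesis by (simp add: W'_def s_coord_def w_coord_def)
qed

lemma Q_part_le:
  fixes S I J \<rho> :: real
  defines "s \<equiv> S - Sb + (I - Ib)" and "w \<equiv> I - Ib"
  assumes near: "\<bar>S - Sb\<bar> < \<rho>" "\<bar>I - Ib\<bar> < \<rho>" and "S \<ge> 0" "J \<ge> 0"
    and rem: "\<bar>F1_rem S I\<bar> \<le> \<gamma> / (8 * C\<^sub>g) * (\<bar>S - Sb\<bar> + \<bar>I - Ib\<bar>)"
    and f2: "f2 (S, J) \<le> f2 (Sb, 0) + m / 4"
    and \<rho>: "3 * C\<^sub>g * \<rho> * (f2 (Sb, 0) + m / 4) \<le> m / 8"
  shows "Q\<^sub>s s w * (- lam * s + (lam - a1) * w + - F2 (S, J)) + Q\<^sub>w s w * (c1 * s + - h * w + F1_rem S I)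
    \<le> - 3 / 2 * \<gamma> * (s\<^sup>2 + w\<^sup>2) + m / 8 * J"
proof -
  define \<sigma> where "\<sigma> = \<bar>s\<bar> + \<bar>w\<bar>"
  have S_diff: "\<bar>S - Sb\<bar> \<le> \<sigma>" and I_diff: "\<bar>I - Ib\<bar> \<le> \<sigma>"
    by (simp_all add: \<sigma>_def s_def w_def abs_triangle_ineq4[of "S - Sb + (I - Ib)" "I - Ib", simplified])
  have "\<sigma> < 3 * \<rho>" using near by (simp add: \<sigma>_def s_def w_def)
  have "\<sigma>\<^sup>2 \<le> 2 * (s\<^sup>2 + w\<^sup>2)"
    using zero_le_power2[of "\<bar>s\<bar> - \<bar>w\<bar>"] by (simp add: \<sigma>_def power2_eq_square algebra_simps)
  have f2_nonneg: "f2 (S, J) \<ge> 0" "f2 (Sb, 0) \<ge> 0"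
    using incidence_factor_nonneg[OF H2] \<open>S \<ge> 0\<close> \<open>J \<ge> 0\<close> E_pos by auto
  have "\<bar>- F2 (S, J)\<bar> \<le> (f2 (Sb, 0) + m / 4) * J"
    using incidence_eq_mult[OF H2 \<open>S \<ge> 0\<close> \<open>J \<ge> 0\<close>] f2 f2_nonneg \<open>J \<ge> 0\<close>
    by (simp add: abs_mult mult.commute mult_left_mono)
  then have "C\<^sub>g * \<sigma> * \<bar>- F2 (S, J)\<bar> \<le> C\<^sub>g * (3 * \<rho>) * ((f2 (Sb, 0) + m / 4) * J)"
    using \<open>\<sigma> < 3 * \<rho>\<close> constants_pos(5) by (intro mult_mono mult_left_mono) (auto simp: \<sigma>_def)
  also have "\<dots> \<le> m / 8 * J"
    using mult_right_mono[OF \<rho> \<open>J \<ge> 0\<close>] by (simp add: ac_simps)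
  finally have F2_term: "C\<^sub>g * \<sigma> * \<bar>- F2 (S, J)\<bar> \<le> m / 8 * J" .
  have "\<bar>S - Sb\<bar> + \<bar>I - Ib\<bar> \<le> 2 * \<sigma>" using S_diff I_diff by simp
  then have "\<bar>F1_rem S I\<bar> \<le> \<gamma> / (8 * C\<^sub>g) * (2 * \<sigma>)"
    by (rule order_trans[OF rem mult_left_mono]) (use constants_pos(4,5) in simp)
  then have "C\<^sub>g * \<sigma> * \<bar>F1_rem S I\<bar> \<le> C\<^sub>g * \<sigma> * (\<gamma> / (8 * C\<^sub>g) * (2 * \<sigma>))"
    using constants_pos(5) by (intro mult_left_mono) (auto simp: \<sigma>_def)
  also have "\<dots> = \<gamma> / 4 * \<sigma>\<^sup>2" using constants_pos(5) by (simp add: power2_eq_square)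
  also have "\<dots> \<le> \<gamma> / 2 * (s\<^sup>2 + w\<^sup>2)"
    using \<open>\<sigma>\<^sup>2 \<le> 2 * (s\<^sup>2 + w\<^sup>2)\<close> constants_pos(4) by simp
  finally have rem_term: "C\<^sub>g * \<sigma> * \<bar>F1_rem S I\<bar> \<le> \<gamma> / 2 * (s\<^sup>2 + w\<^sup>2)" .
  have "Q\<^sub>s s w * (- lam * s + (lam - a1) * w + - F2 (S, J)) + Q\<^sub>w s w * (c1 * s + - h * w + F1_rem S I)
      \<le> - 2 * \<gamma> * (s\<^sup>2 + w\<^sup>2) + C\<^sub>g * \<sigma> * (\<bar>- F2 (S, J)\<bar> + \<bar>F1_rem S I\<bar>)"
    unfolding \<sigma>_def by (rule Q_orbital_derivative_le)
  moreover have "C\<^sub>g * \<sigma> * (\<bar>- F2 (S, J)\<bar> + \<bar>F1_rem S I\<bar>)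
      = C\<^sub>g * \<sigma> * \<bar>- F2 (S, J)\<bar> + C\<^sub>g * \<sigma> * \<bar>F1_rem S I\<bar>" by (simp add: distrib_left)
  ultimately show ?thesis using F2_term rem_term by linarith
qed

lemma V_part_le:
  fixes S V I J \<rho> :: real
  defines "s \<equiv> S - Sb + (I - Ib)" and "w \<equiv> I - Ib"
  assumes V_near: "\<bar>V - Vb\<bar> < \<rho>" and "\<rho> \<le> 1" "V \<ge> 0" "J \<ge> 0"
    and \<rho>: "2 * \<beta> * k * \<rho> * (Vb + 1) \<le> m / 8"
  shows "2 * \<beta> * (V - Vb) * (r * (S - Sb) - mu * (V - Vb) - k * J * V)
    \<le> - \<beta> * mu * (V - Vb)\<^sup>2 + \<gamma> / 2 * (s\<^sup>2 + w\<^sup>2) + m / 8 * J"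
proof -
  define v u where "v = V - Vb" and "u = S - Sb"
  have "u = s - w" by (simp add: u_def s_def w_def)
  have "2 * v * (r * u) \<le> mu * v\<^sup>2 + r\<^sup>2 * u\<^sup>2 / mu"
  proof -
    have "mu * (mu * v\<^sup>2 + r\<^sup>2 * u\<^sup>2 / mu - 2 * v * (r * u)) = (mu * v - r * u)\<^sup>2"
      using pos(2) by (simp add: power2_eq_square algebra_simps)
    then have "0 \<le> mu * (mu * v\<^sup>2 + r\<^sup>2 * u\<^sup>2 / mu - 2 * v * (r * u))" by simp
    then show ?thesis using pos(2) by (simp add: zero_le_mult_iff)
  qed
  also have "r\<^sup>2 * u\<^sup>2 / mu \<le> r\<^sup>2 * (2 * (s\<^sup>2 + w\<^sup>2)) / mu"
    using zero_le_power2[of "s + w"] pos(2) \<open>u = s - w\<close>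
    by (intro divide_right_mono mult_left_mono) (auto simp: power2_eq_square algebra_simps)
  finally have "\<beta> * (2 * v * (r * u)) \<le> \<beta> * (mu * v\<^sup>2 + r\<^sup>2 * (2 * (s\<^sup>2 + w\<^sup>2)) / mu)"
    using constants_pos(6) by (intro mult_left_mono) auto
  moreover have "\<beta> * (mu * v\<^sup>2 + r\<^sup>2 * (2 * (s\<^sup>2 + w\<^sup>2)) / mu) = \<beta> * mu * v\<^sup>2 + \<gamma> / 2 * (s\<^sup>2 + w\<^sup>2)"
    using pos(2,3) by (simp add: \<beta>_def power2_eq_square field_simps)
  ultimately have "2 * \<beta> * v * (r * u) \<le> \<beta> * mu * v\<^sup>2 + \<gamma> / 2 * (s\<^sup>2 + w\<^sup>2)"
    by linarith
  moreover have "- (2 * \<beta> * v * (k * J * V)) \<le> m / 8 * J"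
  proof -
    have "- v * V \<le> \<bar>v\<bar> * V" using \<open>V \<ge> 0\<close> by (intro mult_right_mono) auto
    also have "\<dots> \<le> \<rho> * (Vb + 1)"
      using V_near \<open>\<rho> \<le> 1\<close> \<open>V \<ge> 0\<close> by (intro mult_mono) (auto simp: v_def)
    finally have "- v * V \<le> \<rho> * (Vb + 1)" .
    then have "(2 * \<beta> * k * J) * (- v * V) \<le> (2 * \<beta> * k * J) * (\<rho> * (Vb + 1))"
      using constants_pos(6) pos(4) \<open>J \<ge> 0\<close> by (intro mult_left_mono) auto
    also have "\<dots> \<le> m / 8 * J"
      using \<rho> \<open>J \<ge> 0\<close> mult_right_mono[OF \<rho> \<open>J \<ge> 0\<close>] by (simp add: algebra_simps)
    finally show ?thesis by (simp add: algebra_simps)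
  qed
  ultimately show ?thesis by (simp add: v_def u_def algebra_simps power2_eq_square)
qed

lemma J_part_le:
  assumes "J \<ge> 0" "\<bar>V - Vb\<bar> < \<rho>" "f2 (S, J) \<le> f2 (Sb, 0) + m / 4" "k * \<rho> \<le> m / 4"
  shows "J * (f2 (S, J) + k * V - a2) \<le> - m / 2 * J"
proof -
  have "k * V \<le> k * Vb + k * \<rho>"
    using assms(2) pos(4) by (simp add: flip: distrib_left)
  then have "f2 (S, J) + k * V - a2 \<le> - m / 2"
    using assms(3,4) m_def by linarith
  from mult_left_mono[OF this \<open>J \<ge> 0\<close>] show ?thesis by (simp add: mult.commute)
qed

lemma W'_le_near:
  obtains \<rho> where "\<rho> > 0" "\<And>S V I J. (S, V, I, J) \<in> orthant4 \<Longrightarrow> dist (S, V, I, J) E\<^sub>1 < \<rho> \<Longrightarrow>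
    W' (S, V, I, J) \<le> - (\<gamma> * ((S - Sb + (I - Ib))\<^sup>2 + (I - Ib)\<^sup>2) + \<beta> * mu * (V - Vb)\<^sup>2 + m / 4 * J)"
proof -
  note cp = constants_pos
  define p where "p = f2 (Sb, 0) + m / 4"
  have "p > 0" using incidence_factor_nonneg[OF H2, of Sb 0] E_pos cp(7) by (simp add: p_def)
  obtain \<rho>\<^sub>1 where "\<rho>\<^sub>1 > 0" and rem: "\<And>S I. \<bar>S - Sb\<bar> < \<rho>\<^sub>1 \<Longrightarrow> \<bar>I - Ib\<bar> < \<rho>\<^sub>1 \<Longrightarrow>
      \<bar>F1_rem S I\<bar> \<le> \<gamma> / (8 * C\<^sub>g) * (\<bar>S - Sb\<bar> + \<bar>I - Ib\<bar>)"
    using F1_rem_small[of "\<gamma> / (8 * C\<^sub>g)"] cp(4,5) by auto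
  obtain \<rho>\<^sub>2 where "\<rho>\<^sub>2 > 0" and f2_cont: "\<And>q. dist q (Sb, 0) < \<rho>\<^sub>2 \<Longrightarrow> dist (f2 q) (f2 (Sb, 0)) < m / 4"
    using incidence_pdI_at_zero(2)[OF H2 E_pos(1)] cp(7) unfolding continuous_at_eps_delta
    by (metis zero_less_divide_iff zero_less_numeral)
  define \<rho> where "\<rho> = min (min \<rho>\<^sub>1 (\<rho>\<^sub>2 / 2)) (min (min 1 (m / (4 * k)))
    (min (m / (24 * C\<^sub>g * p)) (m / (16 * \<beta> * k * (Vb + 1)))))"
  have denominators: "4 * k > 0" "24 * C\<^sub>g * p > 0" "16 * \<beta> * k * (Vb + 1) > 0"
    using cp pos E_pos \<open>p > 0\<close> by simp_all
  then have "\<rho> > 0" using \<open>\<rho>\<^sub>1 > 0\<close> \<open>\<rho>\<^sub>2 > 0\<close> cp(7) by (simp add: \<rho>_def)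
  have \<rho>_le: "\<rho> \<le> \<rho>\<^sub>1" "\<rho> \<le> \<rho>\<^sub>2 / 2" "\<rho> \<le> 1" "\<rho> \<le> m / (4 * k)" "\<rho> \<le> m / (24 * C\<^sub>g * p)"
    "\<rho> \<le> m / (16 * \<beta> * k * (Vb + 1))"
    by (simp_all add: \<rho>_def)
  have "k * \<rho> \<le> m / 4" "3 * C\<^sub>g * \<rho> * p \<le> m / 8" "2 * \<beta> * k * \<rho> * (Vb + 1) \<le> m / 8"
    using \<rho>_le(4-6) denominators by (simp_all add: pos_le_divide_eq algebra_simps)
  note \<rho>_small = this[unfolded p_def]
  show ?thesis
  proof (rule that[OF \<open>\<rho> > 0\<close>])
    fix S V I J assume "(S, V, I, J) \<in> orthant4" "dist (S, V, I, J) E\<^sub>1 < \<rho>"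
    then have nonneg: "S \<ge> 0" "V \<ge> 0" "J \<ge> 0"
      and near: "\<bar>S - Sb\<bar> < \<rho>" "\<bar>V - Vb\<bar> < \<rho>" "\<bar>I - Ib\<bar> < \<rho>" "J < \<rho>"
      using abs_diff_le_dist_state[of "(S, V, I, J)" E\<^sub>1] by (auto simp: orthant4_def)
    have "dist (S, J) (Sb, 0) < \<rho>\<^sub>2"
      using dist_Pair_le_sum_abs[of S J Sb 0] near \<rho>_le(2) nonneg by simp
    then have "\<bar>f2 (S, J) - f2 (Sb, 0)\<bar> < m / 4" using f2_cont by (simp add: dist_real_def)
    then have f2: "f2 (S, J) \<le> f2 (Sb, 0) + m / 4" by linarith
    have "\<bar>F1_rem S I\<bar> \<le> \<gamma> / (8 * C\<^sub>g) * (\<bar>S - Sb\<bar> + \<bar>I - Ib\<bar>)"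
      using near \<rho>_le(1) by (intro rem) linarith+
    note parts = Q_part_le[OF near(1,3) nonneg(1,3) this f2 \<rho>_small(2)]
      V_part_le[OF near(2) \<rho>_le(3) nonneg(2,3) \<rho>_small(3)] J_part_le[OF nonneg(3) near(2) f2 \<rho>_small(1)]
    have "W' (S, V, I, J) \<le> (- 3 / 2 * \<gamma> * ((S - Sb + (I - Ib))\<^sup>2 + (I - Ib)\<^sup>2) + m / 8 * J)
        + (- \<beta> * mu * (V - Vb)\<^sup>2 + \<gamma> / 2 * ((S - Sb + (I - Ib))\<^sup>2 + (I - Ib)\<^sup>2) + m / 8 * J)
        + - m / 2 * J"
      unfolding W'_eq[OF nonneg(1,3)] by (rule add_mono[OF add_mono[OF parts(1,2)] parts(3)])
    then show "W' (S, V, I, J)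
        \<le> - (\<gamma> * ((S - Sb + (I - Ib))\<^sup>2 + (I - Ib)\<^sup>2) + \<beta> * mu * (V - Vb)\<^sup>2 + m / 4 * J)"
      by (simp add: algebra_simps)
  qed
qed

lemma W'_le_exp:
  obtains \<rho> \<kappa> where "\<rho> > 0" "\<kappa> > 0" "\<And>q. q \<in> orthant4 \<Longrightarrow> dist q E\<^sub>1 < \<rho> \<Longrightarrow> W' q \<le> - \<kappa> * W q"
proof -
  obtain \<rho> where "\<rho> > 0" and W': "\<And>S V I J. (S, V, I, J) \<in> orthant4 \<Longrightarrow> dist (S, V, I, J) E\<^sub>1 < \<rho> \<Longrightarrow>
      W' (S, V, I, J) \<le> - (\<gamma> * ((S - Sb + (I - Ib))\<^sup>2 + (I - Ib)\<^sup>2) + \<beta> * mu * (V - Vb)\<^sup>2 + m / 4 * J)"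
    using W'_le_near by blast
  define \<kappa> where "\<kappa> = min (\<gamma> / (Fr + \<Delta>)) (min mu (m / 4))"
  have "Fr + \<Delta> > 0" using constants_pos by simp
  then have "\<kappa> > 0" using constants_pos pos by (simp add: \<kappa>_def)
  have "\<kappa> \<le> \<gamma> / (Fr + \<Delta>)" "\<kappa> \<le> mu" "\<kappa> \<le> m / 4"
    unfolding \<kappa>_def by (rule min.cobounded1, (rule min.coboundedI2, simp)+)
  then have "\<kappa> * (Fr + \<Delta>) \<le> \<gamma>" using \<open>Fr + \<Delta> > 0\<close> by (simp add: pos_le_divide_eq)
  have "W' q \<le> - \<kappa> * W q" if "q \<in> orthant4" "dist q E\<^sub>1 < \<rho>" for q
  proof -
    obtain S V I J where q: "q = (S, V, I, J)" by (cases q)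
    define X where "X = (S - Sb + (I - Ib))\<^sup>2 + (I - Ib)\<^sup>2"
    have "J \<ge> 0" "X \<ge> 0" using that by (simp_all add: q orthant4_def X_def)
    have "\<kappa> * W q \<le> \<kappa> * ((Fr + \<Delta>) * X) + \<kappa> * (\<beta> * (V - Vb)\<^sup>2) + \<kappa> * J"
      using Q_upper mult_left_mono[OF _ less_imp_le[OF \<open>\<kappa> > 0\<close>]]
      by (simp add: q W_eq X_def flip: distrib_left)
    also have "\<dots> \<le> \<gamma> * X + mu * (\<beta> * (V - Vb)\<^sup>2) + m / 4 * J"
    proof (rule add_mono[OF add_mono])
      show "\<kappa> * ((Fr + \<Delta>) * X) \<le> \<gamma> * X"
        using mult_right_mono[OF \<open>\<kappa> * (Fr + \<Delta>) \<le> \<gamma>\<close> \<open>X \<ge> 0\<close>] by (simp add: mult.assoc)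
      show "\<kappa> * (\<beta> * (V - Vb)\<^sup>2) \<le> mu * (\<beta> * (V - Vb)\<^sup>2)"
        using \<open>\<kappa> \<le> mu\<close> constants_pos(6) by (intro mult_right_mono) auto
      show "\<kappa> * J \<le> m / 4 * J" using \<open>\<kappa> \<le> m / 4\<close> \<open>J \<ge> 0\<close> by (rule mult_right_mono)
    qed
    finally have "\<kappa> * W q \<le> \<gamma> * X + \<beta> * mu * (V - Vb)\<^sup>2 + m / 4 * J" by (simp add: ac_simps)
    with W'[of S V I J] that show ?thesis by (simp add: q X_def)
  qed
  with \<open>\<rho> > 0\<close> \<open>\<kappa> > 0\<close> that show ?thesis by blast
qed

theorem stable_E1: "loc_asym_stable G orthant4 E\<^sub>1"
proof -
  obtain \<rho> \<kappa> where "\<rho> > 0" "\<kappa> > 0"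
    and decay: "\<And>q. q \<in> orthant4 \<Longrightarrow> dist q E\<^sub>1 < \<rho> \<Longrightarrow> W' q \<le> - \<kappa> * W q"
    using W'_le_exp by blast
  obtain \<omega>\<^sub>0 where "\<omega>\<^sub>0 > 0" and near: "\<And>q. q \<in> orthant4 \<Longrightarrow> W q \<le> \<omega>\<^sub>0 \<Longrightarrow> dist q E\<^sub>1 < \<rho>"
    using W_sublevel_near[OF \<open>\<rho> > 0\<close>] by blast
  interpret exp_lyapunov_function G orthant4 E\<^sub>1 W \<omega>\<^sub>0 \<kappa>
  proof
    show "\<exists>\<omega>>0. \<forall>q\<in>orthant4. W q \<le> \<omega> \<longrightarrow> dist q E\<^sub>1 < \<epsilon>" if "\<epsilon> > 0" for \<epsilon>
      using W_sublevel_near[OF that] by metis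
    fix x t assume "is_solution G orthant4 x" "t > 0" "W (x t) \<le> \<omega>\<^sub>0"
    with is_solution_in_domain[of G orthant4 x t] near decay
    have "W' (x t) \<le> - \<kappa> * W (x t)" by simp
    with W_has_real_derivative[OF \<open>is_solution G orthant4 x\<close> \<open>t > 0\<close>]
    show "\<exists>y. ((\<lambda>t. W (x t)) has_real_derivative y) (at t) \<and> y \<le> - \<kappa> * W (x t)" by blast
  qed (fact W_continuous W_E1 W_nonneg \<open>\<omega>\<^sub>0 > 0\<close> \<open>\<kappa> > 0\<close>)+
  show ?thesis by (rule loc_asym_stable)
qed

end

theorem mainTheorem7:
  fixes F1 f1 F2 f2 :: "real \<times> real \<Rightarrow> real"
    and Lam mu r k gamma1 gamma2 v1 v2 Sb Vb Ib :: real
  assumes pos: "Lam > 0" "mu > 0" "r > 0" "k > 0" "gamma1 > 0" "gamma2 > 0"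
    and nonneg: "v1 \<ge> 0" "v2 \<ge> 0"
    and H1: "incidence_hyp F1 f1" and H2: "incidence_hyp F2 f2"
    and Epos: "Sb > 0" "Vb > 0" "Ib > 0"
    and Eeq: "field F1 F2 Lam mu r k gamma1 gamma2 v1 v2 (Sb, Vb, Ib, 0) = (0, 0, 0, 0)"
  shows "(pdI F2 Sb 0 / (gamma2 + v2 + mu) + k * Vb / (gamma2 + v2 + mu) > 1 \<longrightarrow>
            unstable (field F1 F2 Lam mu r k gamma1 gamma2 v1 v2) orthant4 (Sb, Vb, Ib, 0))
       \<and> (pdI F2 Sb 0 / (gamma2 + v2 + mu) + k * Vb / (gamma2 + v2 + mu) < 1 \<longrightarrow>
            loc_asym_stable (field F1 F2 Lam mu r k gamma1 gamma2 v1 v2) orthant4 (Sb, Vb, Ib, 0))"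
proof -
  interpret E1_equilibrium F1 f1 F2 f2 Lam mu r k gamma1 gamma2 v1 v2 Sb Vb Ib
    by unfold_locales (fact assms)+
  have "a2 > 0" using pos nonneg by simp
  then have R2: "pdI F2 Sb 0 / a2 + k * Vb / a2 = (f2 (Sb, 0) + k * Vb) / a2"
    by (simp add: pdI_F2_E1 add_divide_distrib)
  show ?thesis
  proof (intro conjI impI)
    assume "pdI F2 Sb 0 / a2 + k * Vb / a2 > 1"
    with \<open>a2 > 0\<close> have "f2 (Sb, 0) + k * Vb > a2" by (simp add: R2)
    then show "unstable G orthant4 E\<^sub>1" by (rule unstable_E1)
  next
    assume "pdI F2 Sb 0 / a2 + k * Vb / a2 < 1"
    with \<open>a2 > 0\<close> have "f2 (Sb, 0) + k * Vb < a2" by (simp add: R2)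
    then interpret E1_subthreshold F1 f1 F2 f2 Lam mu r k gamma1 gamma2 v1 v2 Sb Vb Ib
      by unfold_locales
    show "loc_asym_stable G orthant4 E\<^sub>1" by (rule stable_E1)
  qed
qed

end
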